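(* Let $\mathbb U=\{z\in\mathbb C:|z|<1\}$, let $\psi\in H^2(\mathbb U)$ and let $\phi:\mathbb U\to\mathbb U$ be analytic with $\|\phi\|_\infty=\sup_{z\in\mathbb U}|\phi(z)|<1$. Then the weighted composition operator $T_{\psi,\phi}f=\psi\cdot(f\circ\phi)$ and the composition operator $C_\phi f=f\circ\phi$ are nuclear (trace class) on $H^2(\mathbb U)$, and \[ \|T_{\psi,\phi}\|_1\le\frac{\|\psi\|_{H^2(\mathbb U)}}{1-\|\phi\|_\infty}. \]
   Context: $H^2(\mathbb U)$ is the Hardy space of holomorphic $f$ on $\mathbb U$ with $\|f\|_{H^2(\mathbb U)}=\sup_{0\le r<1}\bigl(\frac1{2\pi}\int_0^{2\pi}|f(re^{it})|^2dt\bigr)^{1/2}<\infty$. $\|T\|_1=\mathrm{tr}(\sqrt{T^*T})$ denotes the trace norm. *)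

theory Defs
  imports "HOL-Complex_Analysis.Complex_Analysis"
begin

definition unit_disc :: "complex set" where
  "unit_disc = ball 0 1"

definition int_mean :: "(complex \<Rightarrow> complex) \<Rightarrow> real \<Rightarrow> real" where
  "int_mean f r = (1 / (2 * pi)) * integral {0..2*pi} (\<lambda>t. (cmod (f (of_real r * cis t)))^2)"

definition hardy2 :: "(complex \<Rightarrow> complex) \<Rightarrow> bool" where
  "hardy2 f \<longleftrightarrow> f holomorphic_on unit_disc \<and> bdd_above (int_mean f ` {0..<1})"

definition H2_norm :: "(complex \<Rightarrow> complex) \<Rightarrow> real" where
  "H2_norm f = sqrt (SUP r\<in>{0..<1}. int_mean f r)"

text \<open>Canonical representatives of elements of H^2: extended by 0 outside U.\<close>
definition H2 :: "(complex \<Rightarrow> complex) set" where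
  "H2 = {f. hardy2 f \<and> (\<forall>z. z \<notin> unit_disc \<longrightarrow> f z = 0)}"

text \<open>Inner product of H^2 obtained from the norm by polarization
  (linear in the first argument).\<close>
definition H2_inner :: "(complex \<Rightarrow> complex) \<Rightarrow> (complex \<Rightarrow> complex) \<Rightarrow> complex" where
  "H2_inner f g = (1/4) * (\<Sum>k<(4::nat). \<i>^k * complex_of_real ((H2_norm (\<lambda>z. f z + \<i>^k * g z))^2))"

type_synonym H2op = "(complex \<Rightarrow> complex) \<Rightarrow> (complex \<Rightarrow> complex)"

definition H2_linear :: "H2op \<Rightarrow> bool" where
  "H2_linear T \<longleftrightarrow> (\<forall>f\<in>H2. T f \<in> H2) \<and>
     (\<forall>f\<in>H2. \<forall>g\<in>H2. T (\<lambda>z. f z + g z) = (\<lambda>z. T f z + T g z)) \<and>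
     (\<forall>f\<in>H2. \<forall>c. T (\<lambda>z. c * f z) = (\<lambda>z. c * T f z))"

definition H2_bounded_linear :: "H2op \<Rightarrow> bool" where
  "H2_bounded_linear T \<longleftrightarrow> H2_linear T \<and> (\<exists>K. \<forall>f\<in>H2. H2_norm (T f) \<le> K * H2_norm f)"

definition H2_adjoint :: "H2op \<Rightarrow> H2op \<Rightarrow> bool" where
  "H2_adjoint T S \<longleftrightarrow> (\<forall>g\<in>H2. S g \<in> H2) \<and>
     (\<forall>f\<in>H2. \<forall>g\<in>H2. H2_inner (T f) g = H2_inner f (S g))"

definition H2_pos_sqrt :: "H2op \<Rightarrow> H2op \<Rightarrow> bool" where
  "H2_pos_sqrt A P \<longleftrightarrow> H2_linear P \<and>
     (\<forall>f\<in>H2. Im (H2_inner (P f) f) = 0 \<and> Re (H2_inner (P f) f) \<ge> 0) \<and>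
     (\<forall>f\<in>H2. P (P f) = A f)"

definition H2_basis :: "nat \<Rightarrow> complex \<Rightarrow> complex" where
  "H2_basis n = (\<lambda>z. if z \<in> unit_disc then z ^ n else 0)"

text \<open>Trace class (nuclear): tr(sqrt(T^* T)) < infinity, trace computed in the basis z^n.\<close>
definition trace_class :: "H2op \<Rightarrow> bool" where
  "trace_class T \<longleftrightarrow> H2_bounded_linear T \<and>
     (\<exists>S P. H2_adjoint T S \<and> H2_pos_sqrt (S \<circ> T) P \<and>
        summable (\<lambda>n. Re (H2_inner (P (H2_basis n)) (H2_basis n))))"

definition trace_norm :: "H2op \<Rightarrow> real" where
  "trace_norm T = (THE x. \<exists>S P. H2_adjoint T S \<and> H2_pos_sqrt (S \<circ> T) P \<and>
        (\<lambda>n. Re (H2_inner (P (H2_basis n)) (H2_basis n))) sums x)"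

definition wcomp_op :: "(complex \<Rightarrow> complex) \<Rightarrow> (complex \<Rightarrow> complex) \<Rightarrow> H2op" where
  "wcomp_op \<psi> \<phi> f = (\<lambda>z. if z \<in> unit_disc then \<psi> z * f (\<phi> z) else 0)"

definition comp_op :: "(complex \<Rightarrow> complex) \<Rightarrow> H2op" where
  "comp_op \<phi> f = (\<lambda>z. if z \<in> unit_disc then f (\<phi> z) else 0)"

end

(*
  The weighted composition operator T = T_{psi,phi} sends the monomial z^n to psi * phi^n,
  and |phi| <= s < 1 on the disc gives ||psi * phi^n|| <= s^n ||psi||.  For a bounded operator
  and an orthonormal basis (e_n), the diagonal of |T| = sqrt(T^* T) satisfies
  <|T| e_n, e_n> <= || |T| e_n || = ||T e_n||, hence tr |T| <= sum_n s^n ||psi|| = ||psi|| / (1 - s).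
  The composition operator C_phi is the case psi = 1.

  Behind this stand three classical facts: H^2 is isometric to l^2 via Taylor coefficients
  (Parseval's identity on the circles of radius r < 1); bounded operators on l^2 have adjoints;
  and T^* T has a positive square root, namely t^(-1/2) sqrt(I - B) for the contraction
  B = I - t T^* T, defined by the binomial series of sqrt(1 - x).  Positive square roots are
  unique, so the trace in the definition of ||T||_1 does not depend on the choices made.
*)

theory Submission
  imports Defs
begin

section \<open>The binomial series of \<open>\<surd>(I - B)\<close>\<close>

lemma bounded_bilinear_has_sum_product:
  fixes prod :: "'a::banach \<Rightarrow> 'b::banach \<Rightarrow> 'c::banach"
  assumes "bounded_bilinear prod"
    and a: "summable (\<lambda>k. norm (a k))" "a sums A"
    and b: "summable (\<lambda>k. norm (b k))" "b sums B"
  shows "((\<lambda>(i, j). prod (a i) (b j)) has_sum prod A B) UNIV"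
proof -
  interpret bounded_bilinear prod by fact
  obtain K where K: "\<And>x y. norm (prod x y) \<le> norm x * norm y * K" and "K > 0"
    using pos_bounded by blast
  define f where "f = (\<lambda>(i, j). prod (a i) (b j))"
  have norm_b: "((\<lambda>j. norm (b j)) has_sum (\<Sum>j. norm (b j))) UNIV"
    using b(1) by (intro norm_summable_imp_has_sum) (simp_all add: summable_sums)
  have row: "((\<lambda>j. norm (a i) * norm (b j) * K) has_sum norm (a i) * (\<Sum>j. norm (b j)) * K) UNIV"
    for i using has_sum_cmult_right[OF norm_b, of "norm (a i) * K"] by (simp add: mult_ac)
  have "(\<lambda>(i, j). norm (a i) * norm (b j) * K) summable_on Sigma UNIV (\<lambda>_. UNIV)"
    using a(1) \<open>K > 0\<close> suminf_nonneg[OF b(1)]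
    by (intro summable_on_SigmaI[where g = "\<lambda>i. norm (a i) * (\<Sum>j. norm (b j)) * K"]
        norm_summable_imp_summable_on) (simp_all add: row summable_mult2 abs_mult)
  hence "(\<lambda>p. norm (f p)) summable_on UNIV"
    unfolding UNIV_Times_UNIV by (rule summable_on_comparison_test) (auto simp: f_def K)
  then obtain S where S: "(f has_sum S) UNIV"
    using abs_summable_summable summable_on_def by blast
  have "((\<lambda>i. prod (a i) B) has_sum S) UNIV"
  proof (rule has_sum_SigmaD[where B = "\<lambda>_. UNIV"])
    show "(f has_sum S) (Sigma UNIV (\<lambda>_. UNIV))" using S by simp
    show "((\<lambda>j. f (i, j)) has_sum prod (a i) B) UNIV" for i
      unfolding f_def using has_sum_bounded_linear[OF bounded_linear_right norm_summable_imp_has_sum[OF b]]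
      by simp
  qed
  moreover have "((\<lambda>i. prod (a i) B) has_sum prod A B) UNIV"
    using has_sum_bounded_linear[OF bounded_linear_left norm_summable_imp_has_sum[OF a]] .
  ultimately show ?thesis
    using S has_sum_unique unfolding f_def by blast
qed

lemma bounded_bilinear_Cauchy_product_sums:
  fixes prod :: "'a::banach \<Rightarrow> 'b::banach \<Rightarrow> 'c::banach"
  assumes "bounded_bilinear prod"
    and "summable (\<lambda>k. norm (a k))" "a sums A"
    and "summable (\<lambda>k. norm (b k))" "b sums B"
  shows "(\<lambda>k. \<Sum>i\<le>k. prod (a i) (b (k - i))) sums prod A B"
proof -
  have "bij_betw (\<lambda>(k, i). (i, k - i :: nat)) (Sigma UNIV (\<lambda>k. {..k})) UNIV"
    by (rule bij_betw_byWitness[where f' = "\<lambda>(i, j). (i + j :: nat, i)"]) auto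
  hence "((\<lambda>p. (\<lambda>(i, j). prod (a i) (b j)) ((\<lambda>(k, i). (i, k - i)) p)) has_sum prod A B)
      (Sigma UNIV (\<lambda>k. {..k}))"
    using bounded_bilinear_has_sum_product[OF assms] by (simp only: has_sum_reindex_bij_betw)
  hence "((\<lambda>k. \<Sum>i\<le>k. prod (a i) (b (k - i))) has_sum prod A B) UNIV"
    by (rule has_sum_SigmaD) simp
  thus ?thesis
    by (rule has_sum_imp_sums)
qed

text \<open>The Taylor coefficients of \<open>\<surd>(1 - x)\<close>.\<close>

definition sqrt_coeff :: "nat \<Rightarrow> real" where
  "sqrt_coeff k = (-1)^k * ((1/2) gchoose k)"

lemma sqrt_coeff_pochhammer: "sqrt_coeff k = pochhammer (-1/2) k / fact k"
  by (simp add: sqrt_coeff_def gbinomial_pochhammer flip: power_mult_distrib)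

lemma sqrt_coeff_0 [simp]: "sqrt_coeff 0 = 1"
  by (simp add: sqrt_coeff_def)

lemma sqrt_coeff_Suc: "sqrt_coeff (Suc k) = - pochhammer (1/2) k / (2 * fact (Suc k))"
  by (simp add: sqrt_coeff_pochhammer pochhammer_rec)

lemma sqrt_coeff_nonpos: "k > 0 \<Longrightarrow> sqrt_coeff k \<le> 0"
  using pochhammer_pos[of "1/2::real" "k - 1"] by (cases k) (simp_all add: sqrt_coeff_Suc)

lemma sum_sqrt_coeff: "(\<Sum>k\<le>n. sqrt_coeff k) = pochhammer (1/2) n / fact n"
proof -
  have "(\<Sum>k\<le>n. sqrt_coeff k) = (-1)^n * ((-1/2) gchoose n)"
    using gbinomial_sum_lower_neg[of "1/2::real" n] by (simp add: sqrt_coeff_def mult.commute)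
  also have "\<dots> = pochhammer (1/2) n / fact n"
    by (simp add: gbinomial_pochhammer flip: power_mult_distrib)
  finally show ?thesis .
qed

lemma sum_sqrt_coeff_nonneg: "0 \<le> (\<Sum>k<N. sqrt_coeff k)"
  by (cases N) (simp_all add: lessThan_Suc_atMost sum_sqrt_coeff pochhammer_pos less_imp_le)

lemma summable_abs_sqrt_coeff: "summable (\<lambda>k. \<bar>sqrt_coeff k\<bar>)"
proof (rule summableI_nonneg_bounded)
  fix N
  have "(\<Sum>k<N. \<bar>sqrt_coeff k\<bar>) = (\<Sum>k<N. (if k = 0 then 2 else 0) - sqrt_coeff k)"
    by (intro sum.cong) (auto simp: sqrt_coeff_nonpos abs_of_nonpos)
  also have "\<dots> \<le> 2"
    using sum_sqrt_coeff_nonneg[of N] by (simp add: sum_subtractf sum.If_cases)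
  finally show "(\<Sum>k<N. \<bar>sqrt_coeff k\<bar>) \<le> 2" .
qed simp

lemma sqrt_coeff_Cauchy_product:
  "(\<Sum>i\<le>n. sqrt_coeff i * sqrt_coeff (n - i)) = (if n = 0 then 1 else if n = 1 then -1 else 0)"
proof -
  have "fps_binomial (1/2 :: real) * fps_binomial (1/2) = 1 + fps_X"
    by (simp flip: fps_binomial_add_mult add: fps_binomial_1)
  hence binomial: "(\<Sum>i\<le>n. ((1/2::real) gchoose i) * ((1/2) gchoose (n - i))) = (if n \<le> 1 then 1 else 0)"
    by (simp add: fps_eq_iff fps_mult_nth fps_X_nth atLeast0AtMost split: if_splits)
  have "(\<Sum>i\<le>n. sqrt_coeff i * sqrt_coeff (n - i)) =
      (\<Sum>i\<le>n. (-1)^n * (((1/2) gchoose i) * ((1/2) gchoose (n - i))))"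
    by (intro sum.cong) (simp_all add: sqrt_coeff_def power_add[symmetric] mult_ac)
  also have "\<dots> = (-1)^n * (if n \<le> 1 then 1 else 0)"
    by (simp add: binomial flip: sum_distrib_left)
  finally show ?thesis
    by (cases "n = 0"; cases "n = 1") auto
qed

text \<open>All coefficients but the first are nonpositive, while the partial sums of the
  coefficients are nonnegative.\<close>

lemma sqrt_coeff_series_nonneg:
  assumes "summable (\<lambda>k. sqrt_coeff k * r k)" and "\<And>k. \<bar>r k\<bar> \<le> r 0"
  shows "0 \<le> (\<Sum>k. sqrt_coeff k * r k)"
proof (rule LIMSEQ_le_const[OF summable_LIMSEQ[OF assms(1)]], intro exI allI impI)
  fix N
  have "sqrt_coeff k * r 0 \<le> sqrt_coeff k * r k" for k
    using assms(2)[of k] sqrt_coeff_nonpos[of k] by (cases "k = 0") (auto simp: mult_left_mono_neg)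
  hence "(\<Sum>k<N. sqrt_coeff k) * r 0 \<le> (\<Sum>k<N. sqrt_coeff k * r k)"
    by (simp add: sum_distrib_right sum_mono)
  moreover have "0 \<le> (\<Sum>k<N. sqrt_coeff k) * r 0"
    using sum_sqrt_coeff_nonneg assms(2)[of 0] by simp
  ultimately show "0 \<le> (\<Sum>k<N. sqrt_coeff k * r k)"
    by linarith
qed

primrec blinfun_pow :: "('a::real_normed_vector \<Rightarrow>\<^sub>L 'a) \<Rightarrow> nat \<Rightarrow> 'a \<Rightarrow>\<^sub>L 'a" where
  "blinfun_pow B 0 = id_blinfun"
| "blinfun_pow B (Suc n) = B o\<^sub>L blinfun_pow B n"

lemma blinfun_pow_add: "blinfun_pow B (i + j) = blinfun_pow B i o\<^sub>L blinfun_pow B j"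
  by (induct i) (auto intro: blinfun_eqI)

lemma blinfun_pow_Suc': "blinfun_pow B (Suc n) x = blinfun_pow B n (B x)"
  using blinfun_pow_add[of B n 1] by simp

lemma norm_blinfun_pow_le: "norm B \<le> 1 \<Longrightarrow> norm (blinfun_pow B n) \<le> 1"
proof (induct n)
  case 0 thus ?case by (simp add: norm_blinfun_id_le)
next
  case (Suc n)
  thus ?case
    using norm_blinfun_compose[of B "blinfun_pow B n"] mult_mono[of "norm B" 1 "norm (blinfun_pow B n)" 1]
    by simp
qed

lemma blinfun_pow_commute:
  fixes B :: "'a::real_normed_vector \<Rightarrow>\<^sub>L 'a"
  assumes "linear Q" "\<And>x. Q (B x) = B (Q x)"
  shows "Q (blinfun_pow B n x) = blinfun_pow B n (Q x)"
  by (induct n arbitrary: x) (simp_all add: assms blinfun_pow_Suc')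

definition sqrt_series :: "('a::banach \<Rightarrow>\<^sub>L 'a) \<Rightarrow> 'a \<Rightarrow>\<^sub>L 'a" where
  "sqrt_series B = (\<Sum>k. sqrt_coeff k *\<^sub>R blinfun_pow B k)"

lemma summable_norm_sqrt_series:
  assumes "norm B \<le> 1"
  shows "summable (\<lambda>k. norm (sqrt_coeff k *\<^sub>R blinfun_pow B k))"
proof (rule summable_comparison_test'[OF summable_abs_sqrt_coeff])
  fix k
  show "norm (norm (sqrt_coeff k *\<^sub>R blinfun_pow B k)) \<le> \<bar>sqrt_coeff k\<bar>"
    using mult_left_mono[OF norm_blinfun_pow_le[OF assms], of "\<bar>sqrt_coeff k\<bar>" k] by simp
qed

lemma sqrt_series_sums:
  assumes "norm B \<le> 1"
  shows "(\<lambda>k. sqrt_coeff k *\<^sub>R blinfun_pow B k x) sums sqrt_series B x"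
proof -
  have "(\<lambda>k. sqrt_coeff k *\<^sub>R blinfun_pow B k) sums sqrt_series B"
    unfolding sqrt_series_def
    by (rule summable_sums[OF summable_norm_cancel[OF summable_norm_sqrt_series[OF assms]]])
  from bounded_linear.sums[OF blinfun.bounded_linear_left this]
  show ?thesis
    by (simp add: blinfun.scaleR_left)
qed

lemma sqrt_series_squared:
  assumes "norm B \<le> 1"
  shows "sqrt_series B o\<^sub>L sqrt_series B = id_blinfun - B"
proof -
  define F where "F k = sqrt_coeff k *\<^sub>R blinfun_pow B k" for k
  have F_sums: "F sums sqrt_series B"
    unfolding F_def sqrt_series_def
    by (rule summable_sums[OF summable_norm_cancel[OF summable_norm_sqrt_series[OF assms]]])
  have "(\<lambda>k. \<Sum>i\<le>k. F i o\<^sub>L F (k - i)) sums (sqrt_series B o\<^sub>L sqrt_series B)"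
    using summable_norm_sqrt_series[OF assms] F_sums unfolding F_def
    by (intro bounded_bilinear_Cauchy_product_sums[OF bounded_bilinear_blinfun_compose])
  moreover have "(\<Sum>i\<le>k. F i o\<^sub>L F (k - i)) =
      (if k = 0 then 1 else if k = 1 then -1 else 0) *\<^sub>R blinfun_pow B k" for k
  proof -
    have "F i o\<^sub>L F (k - i) = (sqrt_coeff i * sqrt_coeff (k - i)) *\<^sub>R blinfun_pow B k" if "i \<le> k" for i
      using that blinfun_pow_add[of B i "k - i"]
      by (simp add: F_def bounded_bilinear.scaleR_left[OF bounded_bilinear_blinfun_compose]
          bounded_bilinear.scaleR_right[OF bounded_bilinear_blinfun_compose])
    thus ?thesis
      by (simp add: scaleR_sum_left[symmetric] sqrt_coeff_Cauchy_product)
  qed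
  ultimately have "(\<lambda>k. (if k = 0 then 1 else if k = 1 then -1 else 0) *\<^sub>R blinfun_pow B k)
      sums (sqrt_series B o\<^sub>L sqrt_series B)"
    by simp
  moreover have "B o\<^sub>L id_blinfun = B"
    by (rule blinfun_eqI) simp
  hence "(\<lambda>k. (if k = 0 then 1 else if k = 1 then -1 else 0) *\<^sub>R blinfun_pow B k)
      sums (id_blinfun - B)"
    using sums_finite[of "{0, 1}" "\<lambda>k. (if k = 0 then 1 else if k = 1 then -1 else 0) *\<^sub>R blinfun_pow B k"]
    by auto
  ultimately show ?thesis
    by (rule sums_unique2)
qed

lemma sqrt_series_commute:
  fixes B :: "'a::banach \<Rightarrow>\<^sub>L 'a"
  assumes "norm B \<le> 1" and Q: "bounded_linear Q" "\<And>x. Q (B x) = B (Q x)"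
  shows "Q (sqrt_series B x) = sqrt_series B (Q x)"
proof -
  have "(\<lambda>k. Q (sqrt_coeff k *\<^sub>R blinfun_pow B k x)) sums Q (sqrt_series B x)"
    by (rule bounded_linear.sums[OF Q(1) sqrt_series_sums[OF assms(1)]])
  moreover have "Q (sqrt_coeff k *\<^sub>R blinfun_pow B k x) = sqrt_coeff k *\<^sub>R blinfun_pow B k (Q x)" for k
    using Q by (simp add: linear_scale[OF bounded_linear.linear[OF Q(1)]] blinfun_pow_commute
        bounded_linear.linear)
  ultimately show ?thesis
    using sqrt_series_sums[OF assms(1), of "Q x"] by (simp add: sums_unique2)
qed

section \<open>The sequence space \<open>\<ell>\<^sup>2\<close>\<close>

definition square_summable :: "(nat \<Rightarrow> complex) \<Rightarrow> bool" where
  "square_summable a \<longleftrightarrow> summable (\<lambda>n. (cmod (a n))^2)"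

lemma square_summable_add:
  assumes "square_summable a" "square_summable b"
  shows "square_summable (\<lambda>n. a n + b n)"
  unfolding square_summable_def
proof (rule summable_comparison_test')
  show "summable (\<lambda>n. 2 * (cmod (a n))^2 + 2 * (cmod (b n))^2)"
    using assms unfolding square_summable_def by (intro summable_add summable_mult)
  fix n
  have "(cmod (a n + b n))^2 \<le> (cmod (a n) + cmod (b n))^2"
    by (simp add: power_mono norm_triangle_ineq)
  also have "\<dots> \<le> 2 * (cmod (a n))^2 + 2 * (cmod (b n))^2"
    using sum_squares_bound[of "cmod (a n)" "cmod (b n)"] by (simp add: power2_sum)
  finally show "norm ((cmod (a n + b n))^2) \<le> 2 * (cmod (a n))^2 + 2 * (cmod (b n))^2"
    by simp
qed

lemma square_summable_mult: "square_summable a \<Longrightarrow> square_summable (\<lambda>n. c * a n)"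
  using summable_mult[of "\<lambda>n. (cmod (a n))^2" "(cmod c)^2"]
  by (simp add: square_summable_def norm_mult power_mult_distrib)

lemma summable_mult_cnj:
  assumes "square_summable a" "square_summable b"
  shows "summable (\<lambda>n. a n * cnj (b n))"
proof (rule summable_norm_cancel, rule summable_comparison_test')
  show "summable (\<lambda>n. ((cmod (a n))^2 + (cmod (b n))^2) / 2)"
    using assms unfolding square_summable_def by (intro summable_add summable_divide)
  fix n show "norm (norm (a n * cnj (b n))) \<le> ((cmod (a n))^2 + (cmod (b n))^2) / 2"
    using sum_squares_bound[of "cmod (a n)" "cmod (b n)"] by (simp add: norm_mult)
qed

typedef ell2 = "{a. square_summable a}"
  morphisms coord Abs_ell2
  by (rule exI[of _ "\<lambda>_. 0"]) (simp add: square_summable_def)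

setup_lifting type_definition_ell2

lemma square_summable_coord [simp]: "square_summable (coord x)"
  using coord by simp

lemma summable_coord: "summable (\<lambda>n. (cmod (coord x n))^2)"
  using square_summable_coord unfolding square_summable_def .

lemma coord_Abs_ell2: "square_summable a \<Longrightarrow> coord (Abs_ell2 a) = a"
  by (simp add: Abs_ell2_inverse)

lemma ell2_eqI: "(\<And>n. coord x n = coord y n) \<Longrightarrow> x = y"
  by (metis coord_inject ext)

instantiation ell2 :: real_vector
begin
lift_definition zero_ell2 :: ell2 is "\<lambda>_. 0"
  by (simp add: square_summable_def)
lift_definition plus_ell2 :: "ell2 \<Rightarrow> ell2 \<Rightarrow> ell2" is "\<lambda>a b n. a n + b n"
  by (rule square_summable_add)
lift_definition uminus_ell2 :: "ell2 \<Rightarrow> ell2" is "\<lambda>a n. - a n"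
  by (simp add: square_summable_def)
lift_definition minus_ell2 :: "ell2 \<Rightarrow> ell2 \<Rightarrow> ell2" is "\<lambda>a b n. a n - b n"
proof -
  fix a b :: "nat \<Rightarrow> complex"
  assume "square_summable a" "square_summable b"
  hence "square_summable (\<lambda>n. a n + (-1) * b n)"
    by (intro square_summable_add square_summable_mult)
  thus "square_summable (\<lambda>n. a n - b n)"
    by simp
qed
lift_definition scaleR_ell2 :: "real \<Rightarrow> ell2 \<Rightarrow> ell2" is "\<lambda>r a n. of_real r * a n"
  by (rule square_summable_mult)
instance
proof
  fix x y z :: ell2 and a b :: real
  show "x + y + z = x + (y + z)" by transfer (simp add: add.assoc)
  show "x + y = y + x" by transfer (simp add: add.commute)
  show "0 + x = x" by transfer simp
  show "- x + x = 0" by transfer simp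
  show "x - y = x + - y" by transfer simp
  show "a *\<^sub>R (x + y) = a *\<^sub>R x + a *\<^sub>R y" by transfer (simp add: algebra_simps)
  show "(a + b) *\<^sub>R x = a *\<^sub>R x + b *\<^sub>R x" by transfer (simp add: algebra_simps)
  show "a *\<^sub>R b *\<^sub>R x = (a * b) *\<^sub>R x" by transfer (simp add: mult.assoc)
  show "1 *\<^sub>R x = x" by transfer simp
qed
end

lemma coord_zero [simp]: "coord 0 n = 0"
  and coord_add [simp]: "coord (x + y) n = coord x n + coord y n"
  and coord_diff [simp]: "coord (x - y) n = coord x n - coord y n"
  and coord_uminus [simp]: "coord (- x) n = - coord x n"
  and coord_scaleR [simp]: "coord (r *\<^sub>R x) n = of_real r * coord x n"
  by (simp_all add: zero_ell2.rep_eq plus_ell2.rep_eq minus_ell2.rep_eq uminus_ell2.rep_eq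
      scaleR_ell2.rep_eq)

lemma coord_sum: "coord (\<Sum>i\<in>A. f i) n = (\<Sum>i\<in>A. coord (f i) n)"
  by (induct A rule: infinite_finite_induct) simp_all

lift_definition cscale :: "complex \<Rightarrow> ell2 \<Rightarrow> ell2" is "\<lambda>c a n. c * a n"
  by (rule square_summable_mult)

lemma coord_cscale [simp]: "coord (cscale c x) n = c * coord x n"
  by (simp add: cscale.rep_eq)

lemma cscale_one [simp]: "cscale 1 x = x"
  by (rule ell2_eqI) simp

lemma cscale_of_real: "cscale (of_real r) x = r *\<^sub>R x"
  and cscale_add_right: "cscale c (x + y) = cscale c x + cscale c y"
  and cscale_diff_right: "cscale c (x - y) = cscale c x - cscale c y"
  and cscale_scaleR_commute: "cscale c (r *\<^sub>R x) = r *\<^sub>R cscale c x"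
  by (rule ell2_eqI; simp add: algebra_simps)+

text \<open>Linear in the first argument, like \<^const>\<open>H2_inner\<close>.\<close>

lift_definition cinner :: "ell2 \<Rightarrow> ell2 \<Rightarrow> complex" is "\<lambda>a b. \<Sum>n. a n * cnj (b n)" .

lemma cinner_coord: "cinner x y = (\<Sum>n. coord x n * cnj (coord y n))"
  by (simp add: cinner.rep_eq)

lemma summable_cinner: "summable (\<lambda>n. coord x n * cnj (coord y n))"
  by (rule summable_mult_cnj) simp_all

lemma cinner_commute: "cinner y x = cnj (cinner x y)"
proof -
  have "(\<lambda>n. cnj (coord x n * cnj (coord y n))) sums cnj (cinner x y)"
    unfolding cinner_coord sums_cnj by (rule summable_sums[OF summable_cinner])
  thus ?thesis
    unfolding cinner_coord by (simp add: sums_iff mult.commute)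
qed

lemma cinner_add_left: "cinner (x + y) z = cinner x z + cinner y z"
  unfolding cinner_coord coord_add distrib_right
  by (rule suminf_add[OF summable_cinner summable_cinner, symmetric])

lemma cinner_cscale_left: "cinner (cscale c x) y = c * cinner x y"
  unfolding cinner_coord coord_cscale mult.assoc
  by (rule suminf_mult[OF summable_cinner])

lemma cinner_add_right: "cinner z (x + y) = cinner z x + cinner z y"
  by (metis cinner_commute cinner_add_left complex_cnj_add)

lemma cinner_cscale_right: "cinner x (cscale c y) = cnj c * cinner x y"
  by (metis cinner_commute cinner_cscale_left complex_cnj_mult)

lemma cinner_scaleR_left: "cinner (r *\<^sub>R x) y = of_real r * cinner x y"
  by (metis cinner_cscale_left cscale_of_real)

lemma cinner_scaleR_right: "cinner x (r *\<^sub>R y) = of_real r * cinner x y"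
  by (metis cinner_cscale_right cscale_of_real complex_cnj_complex_of_real)

lemma cinner_diff_left: "cinner (x - y) z = cinner x z - cinner y z"
  by (metis add_diff_cancel cinner_add_left diff_add_cancel)

lemma cinner_diff_right: "cinner x (y - z) = cinner x y - cinner x z"
  by (metis add_diff_cancel cinner_add_right diff_add_cancel)

lemma cinner_zero_left [simp]: "cinner 0 y = 0"
  using cinner_add_left[of 0 0 y] by simp

lemma cinner_sum_left: "cinner (\<Sum>i\<in>A. f i) y = (\<Sum>i\<in>A. cinner (f i) y)"
  by (induct A rule: infinite_finite_induct) (simp_all add: cinner_add_left)

lemma cinner_self_coord: "cinner x x = of_real (\<Sum>n. (cmod (coord x n))^2)"
proof -
  have "cinner x x = (\<Sum>n. of_real ((cmod (coord x n))^2))"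
    unfolding cinner_coord by (simp only: complex_norm_square)
  also have "\<dots> = of_real (\<Sum>n. (cmod (coord x n))^2)"
    by (rule suminf_of_real[OF summable_coord, symmetric])
  finally show ?thesis .
qed

instantiation ell2 :: real_inner
begin
definition inner_ell2 :: "ell2 \<Rightarrow> ell2 \<Rightarrow> real" where
  "inner_ell2 x y = Re (cinner x y)"
definition norm_ell2 :: "ell2 \<Rightarrow> real" where
  "norm_ell2 x = sqrt (\<Sum>n. (cmod (coord x n))^2)"
definition dist_ell2 :: "ell2 \<Rightarrow> ell2 \<Rightarrow> real" where
  "dist_ell2 x y = norm (x - y)"
definition sgn_ell2 :: "ell2 \<Rightarrow> ell2" where
  "sgn_ell2 x = x /\<^sub>R norm x"
definition uniformity_ell2 :: "(ell2 \<times> ell2) filter" where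
  "uniformity_ell2 = (INF e\<in>{0 <..}. principal {(x, y). dist x y < e})"
definition open_ell2 :: "ell2 set \<Rightarrow> bool" where
  "open_ell2 U \<longleftrightarrow> (\<forall>x\<in>U. eventually (\<lambda>(x', y). x' = x \<longrightarrow> y \<in> U) uniformity)"
instance
proof
  fix x y z :: ell2 and r :: real
  have self: "inner x x = (\<Sum>n. (cmod (coord x n))^2)"
    by (simp add: inner_ell2_def cinner_self_coord)
  show "inner x y = inner y x"
    by (simp add: inner_ell2_def cinner_commute[of x y])
  show "inner (x + y) z = inner x z + inner y z"
    by (simp add: inner_ell2_def cinner_add_left)
  show "inner (r *\<^sub>R x) y = r * inner x y"
    by (simp add: inner_ell2_def cinner_scaleR_left)
  show "0 \<le> inner x x"
    unfolding self by (rule suminf_nonneg[OF summable_coord]) simp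
  have zero_iff: "(\<Sum>n. (cmod (coord x n))^2) = 0 \<longleftrightarrow> (\<forall>n. (cmod (coord x n))^2 = 0)"
    by (rule suminf_eq_zero_iff[OF summable_coord]) simp
  show "inner x x = 0 \<longleftrightarrow> x = 0"
  proof
    assume "inner x x = 0"
    hence "\<forall>n. coord x n = 0"
      using zero_iff self by simp
    thus "x = 0"
      by (intro ell2_eqI) simp
  qed (simp add: inner_ell2_def)
  show "norm x = sqrt (inner x x)"
    by (simp add: norm_ell2_def self)
  show "dist x y = norm (x - y)"
    by (simp add: dist_ell2_def)
  show "sgn x = x /\<^sub>R norm x"
    by (simp add: sgn_ell2_def)
  show "(uniformity :: (ell2 \<times> ell2) filter) = (INF e\<in>{0 <..}. principal {(x, y). dist x y < e})"
    by (simp add: uniformity_ell2_def)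
  show "open U \<longleftrightarrow> (\<forall>x\<in>U. eventually (\<lambda>(x', y). x' = x \<longrightarrow> y \<in> U) uniformity)"
    for U :: "ell2 set"
    by (simp add: open_ell2_def)
qed
end

lemma norm_ell2_sq: "(norm x)^2 = (\<Sum>n. (cmod (coord x n))^2)"
  using inner_ge_zero[of x] by (simp add: norm_eq_sqrt_inner inner_ell2_def cinner_self_coord)

lemma cinner_self: "cinner x x = of_real ((norm x)^2)"
  by (simp add: cinner_self_coord norm_ell2_sq)

lemma inner_ell2_cinner: "inner x y = Re (cinner x y)"
  by (simp add: inner_ell2_def)

lemma norm_cscale: "norm (cscale c x) = cmod c * norm x"
proof -
  have "(norm (cscale c x))^2 = (cmod c)^2 * (norm x)^2"
    unfolding norm_ell2_sq
    by (simp add: norm_mult power_mult_distrib suminf_mult[OF summable_coord])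
  also have "\<dots> = (cmod c * norm x)^2"
    by (simp add: power_mult_distrib)
  finally show ?thesis
    by (simp add: power2_eq_iff_nonneg)
qed

text \<open>Cauchy--Schwarz: rotate \<open>x\<close> by a unimodular \<open>c\<close> to make the inner product real.\<close>

lemma norm_cinner: "cmod (cinner x y) \<le> norm x * norm y"
proof (cases "cinner x y = 0")
  case False
  define c where "c = cnj (cinner x y) / of_real (cmod (cinner x y))"
  have "cmod c = 1"
    using False by (simp add: c_def norm_divide)
  have "c * cinner x y = of_real (cmod (cinner x y))"
    using False by (simp add: c_def complex_norm_square[symmetric] power2_eq_square mult.commute)
  hence "cmod (cinner x y) = inner (cscale c x) y"
    by (simp add: inner_ell2_cinner cinner_cscale_left)
  also have "\<dots> \<le> norm (cscale c x) * norm y"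
    by (rule Cauchy_Schwarz_ineq2[THEN order_trans[OF abs_ge_self]])
  finally show ?thesis
    by (simp add: norm_cscale \<open>cmod c = 1\<close>)
qed simp

lemma cinner_eqI: "(\<And>x. cinner x y = cinner x z) \<Longrightarrow> y = z"
  using cinner_self[of "y - z"] cinner_diff_right[of "y - z" y z] by simp

lift_definition ket :: "nat \<Rightarrow> ell2" is "\<lambda>k n. if n = k then 1 else 0"
proof -
  fix k :: nat
  have "summable (\<lambda>n. if n = k then 1 else 0 :: real)"
    by (rule summable_finite[of "{k}"]) auto
  thus "square_summable (\<lambda>n. if n = k then 1 else 0)"
    unfolding square_summable_def by (rule summable_cong[THEN iffD1, rotated]) simp
qed

lemma coord_ket: "coord (ket k) n = (if n = k then 1 else 0)"
  by (simp add: ket.rep_eq)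

lemma cinner_ket: "cinner x (ket k) = coord x k"
proof -
  have "(\<lambda>n. coord x n * cnj (coord (ket k) n)) sums coord x k"
    using sums_single[of k "coord x"] by (simp add: coord_ket if_distrib cong: if_cong)
  thus ?thesis
    unfolding cinner_coord by (simp add: sums_iff)
qed

lemma norm_ket [simp]: "norm (ket k) = 1"
proof -
  have "complex_of_real ((norm (ket k))^2) = 1"
    using cinner_self[of "ket k"] by (simp add: cinner_ket coord_ket)
  hence "(norm (ket k))^2 = 1^2"
    by (metis of_real_eq_1_iff power_one)
  thus ?thesis
    using power2_eq_iff_nonneg[of "norm (ket k)" 1] by simp
qed

lemma norm_coord_le: "cmod (coord x k) \<le> norm x"
  using norm_cinner[of x "ket k"] by (simp add: cinner_ket)

lemma norm_sum_ket:
  "(norm (\<Sum>n<N. cscale (b n) (ket n)))^2 = (\<Sum>n<N. (cmod (b n))^2)"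
proof -
  have coord_eq: "coord (\<Sum>n<N. cscale (b n) (ket n)) k = (if k < N then b k else 0)" for k
    by (simp add: coord_sum coord_ket if_distrib sum.delta' cong: if_cong)
  have "(norm (\<Sum>n<N. cscale (b n) (ket n)))^2 = (\<Sum>k<N. (cmod (if k < N then b k else 0))^2)"
    unfolding norm_ell2_sq coord_eq by (rule suminf_finite) auto
  thus ?thesis by simp
qed

text \<open>Completeness is proved coordinatewise: a Cauchy sequence converges in every coordinate,
  and the tails are controlled uniformly by the Cauchy bound on finite partial sums.\<close>

lemma Cauchy_coord:
  assumes "Cauchy X"
  shows "Cauchy (\<lambda>m. coord (X m) k)"
proof (rule CauchyI)
  fix e :: real assume "0 < e"
  from CauchyD[OF assms this] obtain M where M: "\<forall>m\<ge>M. \<forall>n\<ge>M. norm (X m - X n) < e"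
    by blast
  have "norm (coord (X m) k - coord (X n) k) < e" if "M \<le> m" "M \<le> n" for m n
    using norm_coord_le[of "X m - X n" k] M that by fastforce
  thus "\<exists>M. \<forall>m\<ge>M. \<forall>n\<ge>M. norm (coord (X m) k - coord (X n) k) < e"
    by blast
qed

lemma Cauchy_tail_bound:
  assumes X: "Cauchy X" and L: "\<And>k. (\<lambda>m. coord (X m) k) \<longlonglongrightarrow> L k" and "e > 0"
  obtains N where "\<And>m. m \<ge> N \<Longrightarrow> square_summable (\<lambda>k. coord (X m) k - L k)"
    and "\<And>m. m \<ge> N \<Longrightarrow> (\<Sum>k. (cmod (coord (X m) k - L k))^2) \<le> e^2"
proof -
  from CauchyD[OF X \<open>e > 0\<close>] obtain N where N: "\<forall>m\<ge>N. \<forall>n\<ge>N. norm (X m - X n) < e"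
    by blast
  have partial: "(\<Sum>k<K. (cmod (coord (X m) k - L k))^2) \<le> e^2" if "m \<ge> N" for m K
  proof -
    have "(\<Sum>k<K. (cmod (coord (X m) k - coord (X n) k))^2) \<le> e^2" if "n \<ge> N" for n
    proof -
      have "(\<Sum>k<K. (cmod (coord (X m - X n) k))^2) \<le> (norm (X m - X n))^2"
        unfolding norm_ell2_sq by (rule sum_le_suminf[OF summable_coord]) auto
      also have "\<dots> \<le> e^2"
        using N \<open>m \<ge> N\<close> that by (intro power_mono) (auto intro: less_imp_le)
      finally show ?thesis by simp
    qed
    moreover have "(\<lambda>n. \<Sum>k<K. (cmod (coord (X m) k - coord (X n) k))^2)
        \<longlonglongrightarrow> (\<Sum>k<K. (cmod (coord (X m) k - L k))^2)"
      by (intro tendsto_intros L)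
    ultimately show ?thesis
      using LIMSEQ_le_const2 by blast
  qed
  have "summable (\<lambda>k. (cmod (coord (X m) k - L k))^2)" if "m \<ge> N" for m
    by (rule summableI_nonneg_bounded[OF _ partial[OF that]]) simp
  moreover have "(\<Sum>k. (cmod (coord (X m) k - L k))^2) \<le> e^2" if "m \<ge> N" for m
    by (rule suminf_le_const[OF calculation[OF that] partial[OF that]])
  ultimately show thesis
    using that unfolding square_summable_def by blast
qed

instance ell2 :: banach
proof
  fix X :: "nat \<Rightarrow> ell2" assume X: "Cauchy X"
  define L where "L k = lim (\<lambda>m. coord (X m) k)" for k
  have L: "(\<lambda>m. coord (X m) k) \<longlonglongrightarrow> L k" for k
    using Cauchy_coord[OF X] unfolding L_def by (simp add: Cauchy_convergent_iff convergent_LIMSEQ_iff)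
  obtain N where "square_summable (\<lambda>k. coord (X N) k - L k)"
    using Cauchy_tail_bound[OF X L zero_less_one] by blast
  hence "square_summable (\<lambda>k. coord (X N) k + (-1) * (coord (X N) k - L k))"
    by (intro square_summable_add square_summable_mult) simp_all
  hence coord_lim: "coord (Abs_ell2 L) = L"
    by (simp add: coord_Abs_ell2)
  have "X \<longlonglongrightarrow> Abs_ell2 L"
  proof (rule LIMSEQ_I)
    fix r :: real assume "0 < r"
    hence "r/2 > 0"
      by simp
    then obtain N where N: "\<And>m. m \<ge> N \<Longrightarrow> (\<Sum>k. (cmod (coord (X m) k - L k))^2) \<le> (r/2)^2"
      using Cauchy_tail_bound[OF X L] by blast
    have "norm (X m - Abs_ell2 L) < r" if "m \<ge> N" for m
    proof -
      have "norm (X m - Abs_ell2 L) \<le> r/2"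
        by (rule power2_le_imp_le) (use N[OF that] \<open>0 < r\<close> in \<open>simp_all add: norm_ell2_sq coord_lim\<close>)
      thus ?thesis
        using \<open>0 < r\<close> by simp
    qed
    thus "\<exists>N. \<forall>m\<ge>N. norm (X m - Abs_ell2 L) < r"
      by blast
  qed
  thus "convergent X"
    by (rule convergentI)
qed

definition truncate :: "nat \<Rightarrow> ell2 \<Rightarrow> ell2" where
  "truncate N x = (\<Sum>n<N. cscale (coord x n) (ket n))"

lemma truncate_tendsto: "(\<lambda>N. truncate N x) \<longlonglongrightarrow> x"
proof -
  define tail where "tail N n = (if n < N then 0 else (cmod (coord x n))^2)" for N n
  have coord_tail: "coord (x - truncate N x) n = (if n < N then 0 else coord x n)" for N n
    by (simp add: truncate_def coord_sum coord_ket if_distrib sum.delta' cong: if_cong)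
  have norm_eq: "(norm (x - truncate N x))^2 = (\<Sum>n. tail N n)" for N
    unfolding norm_ell2_sq coord_tail tail_def by (intro suminf_cong) simp
  have "(\<Sum>n. tail N n) = (\<Sum>n. (cmod (coord x n))^2) - (\<Sum>n<N. (cmod (coord x n))^2)" for N
  proof -
    have "(\<lambda>n. (cmod (coord x n))^2 - (if n < N then (cmod (coord x n))^2 else 0)) sums
        ((\<Sum>n. (cmod (coord x n))^2) - (\<Sum>n<N. (cmod (coord x n))^2))"
      using sums_If_finite_set[of "{..<N}" "\<lambda>n. (cmod (coord x n))^2"]
      by (intro sums_diff summable_sums[OF summable_coord]) simp_all
    moreover have "(\<lambda>n. (cmod (coord x n))^2 - (if n < N then (cmod (coord x n))^2 else 0)) = tail N"
      by (auto simp: tail_def fun_eq_iff)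
    ultimately show ?thesis
      by (simp add: sums_iff)
  qed
  moreover have "(\<lambda>N. (\<Sum>n. (cmod (coord x n))^2) - (\<Sum>n<N. (cmod (coord x n))^2)) \<longlonglongrightarrow> 0"
    using tendsto_diff[OF tendsto_const[of "\<Sum>n. (cmod (coord x n))^2"] summable_LIMSEQ[OF summable_coord[of x]]]
    by simp
  ultimately have "(\<lambda>N. (norm (x - truncate N x))^2) \<longlonglongrightarrow> 0"
    by (simp add: norm_eq)
  hence "(\<lambda>N. norm (truncate N x - x)) \<longlonglongrightarrow> 0"
    using tendsto_real_sqrt by (fastforce simp: norm_minus_commute)
  thus ?thesis
    by (simp add: tendsto_norm_zero_iff LIM_zero_iff)
qed

section \<open>Operators on \<open>\<ell>\<^sup>2\<close>\<close>

definition clinear :: "(ell2 \<Rightarrow> ell2) \<Rightarrow> bool" where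
  "clinear f \<longleftrightarrow> (\<forall>x y. f (x + y) = f x + f y) \<and> (\<forall>c x. f (cscale c x) = cscale c (f x))"

lemma clinear_add: "clinear f \<Longrightarrow> f (x + y) = f x + f y"
  and clinear_cscale: "clinear f \<Longrightarrow> f (cscale c x) = cscale c (f x)"
  by (simp_all add: clinear_def)

lemma clinear_scaleR: "clinear f \<Longrightarrow> f (r *\<^sub>R x) = r *\<^sub>R f x"
  using clinear_cscale[of f "of_real r" x] by (simp add: cscale_of_real)

lemma clinear_diff: "clinear f \<Longrightarrow> f (x - y) = f x - f y"
  by (metis add_diff_cancel clinear_add diff_add_cancel)

lemma clinear_zero: "clinear f \<Longrightarrow> f 0 = 0"
  using clinear_diff[of f 0 0] by simp

lemma clinear_sum: "clinear f \<Longrightarrow> f (\<Sum>i\<in>A. g i) = (\<Sum>i\<in>A. f (g i))"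
  by (induct A rule: infinite_finite_induct) (simp_all add: clinear_zero clinear_add)

lemma clinear_bounded_linear:
  assumes "clinear f" "\<And>x. norm (f x) \<le> K * norm x"
  shows "bounded_linear f"
  by (rule bounded_linear_intro[of _ K]) (use assms in \<open>auto simp: clinear_add clinear_scaleR mult.commute\<close>)

lemma bounded_linear_cinner_left: "bounded_linear (\<lambda>x. cinner x y)"
  by (rule bounded_linear_intro[of _ "norm y"])
     (auto simp: cinner_add_left cinner_scaleR_left scaleR_conv_of_real norm_cinner)

lemma bounded_linear_cinner_right: "bounded_linear (\<lambda>y. cinner x y)"
proof (rule bounded_linear_intro[of _ "norm x"])
  show "cmod (cinner x y) \<le> norm y * norm x" for y
    using norm_cinner[of x y] by (simp add: mult.commute)
qed (simp_all add: cinner_add_right cinner_scaleR_right scaleR_conv_of_real)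

lemma bounded_linear_cscale: "bounded_linear (cscale c)"
  by (rule bounded_linear_intro[of _ "cmod c"])
     (auto simp: cscale_add_right cscale_scaleR_commute norm_cscale mult.commute)

lemma norm_bound_nonneg:
  assumes "\<And>x :: ell2. norm (f x) \<le> K * norm x"
  shows "0 \<le> K"
  using assms[of "ket 0"] norm_ge_zero[of "f (ket 0)"] by (simp del: norm_ge_zero)

definition is_adjoint :: "(ell2 \<Rightarrow> ell2) \<Rightarrow> (ell2 \<Rightarrow> ell2) \<Rightarrow> bool" where
  "is_adjoint T S \<longleftrightarrow> (\<forall>x y. cinner (T x) y = cinner x (S y))"

lemma adjoint_clinear:
  assumes "is_adjoint T S"
  shows "clinear S"
proof -
  have adj: "cinner x (S y) = cinner (T x) y" for x y
    using assms by (simp add: is_adjoint_def)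
  have "S (x + y) = S x + S y" for x y
    by (rule cinner_eqI) (simp add: adj cinner_add_right)
  moreover have "S (cscale c x) = cscale c (S x)" for c x
    by (rule cinner_eqI) (simp add: adj cinner_cscale_right)
  ultimately show ?thesis
    by (simp add: clinear_def)
qed

lemma adjoint_bound:
  assumes S: "is_adjoint T S" and K: "\<And>x. norm (T x) \<le> K * norm x"
  shows "norm (S y) \<le> K * norm y"
proof -
  have "(norm (S y))^2 = cmod (cinner (T (S y)) y)"
    using S by (simp add: is_adjoint_def cinner_self norm_power)
  also have "\<dots> \<le> K * norm (S y) * norm y"
    using norm_cinner[of "T (S y)" y] K[of "S y"] by (meson mult_right_mono norm_ge_zero order_trans)
  finally have "norm (S y) * norm (S y) \<le> norm (S y) * (K * norm y)"
    by (simp add: power2_eq_square mult_ac)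
  thus ?thesis
    using norm_bound_nonneg[OF K] by (cases "norm (S y) = 0") auto
qed

text \<open>Testing \<open>T\<close> against \<open>z = \<Sum>\<^sub>n\<^sub><\<^sub>N \<langle>y, Te\<^sub>n\<rangle> e\<^sub>n\<close> gives
  \<open>\<parallel>z\<parallel>\<^sup>2 = \<langle>Tz, y\<rangle> \<le> K\<parallel>z\<parallel>\<parallel>y\<parallel>\<close>.\<close>

lemma sum_cinner_ket_le:
  assumes T: "clinear T" and K: "\<And>x. norm (T x) \<le> K * norm x"
  shows "(\<Sum>n<N. (cmod (cinner y (T (ket n))))^2) \<le> (K * norm y)^2"
proof -
  define z where "z = (\<Sum>n<N. cscale (cinner y (T (ket n))) (ket n))"
  have norm_z: "(norm z)^2 = (\<Sum>n<N. (cmod (cinner y (T (ket n))))^2)"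
    unfolding z_def by (rule norm_sum_ket)
  have "cinner (T z) y = of_real ((norm z)^2)"
    unfolding norm_z unfolding z_def
    by (simp add: clinear_sum[OF T] clinear_cscale[OF T] cinner_sum_left cinner_cscale_left
        cinner_commute[of y] mult.commute flip: complex_norm_square)
  hence "(norm z)^2 = cmod (cinner (T z) y)"
    by (simp add: norm_power)
  also have "\<dots> \<le> K * norm z * norm y"
    using norm_cinner[of "T z" y] K[of z] by (meson mult_right_mono norm_ge_zero order_trans)
  finally have "norm z * norm z \<le> norm z * (K * norm y)"
    by (simp add: power2_eq_square mult_ac)
  hence "norm z \<le> K * norm y"
    using norm_bound_nonneg[OF K] by (cases "norm z = 0") auto
  thus ?thesis
    unfolding norm_z[symmetric] by (simp add: power_mono)
qed

text \<open>The adjoint has coordinates \<open>(S y)\<^sub>n = \<langle>y, T e\<^sub>n\<rangle>\<close>.\<close>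

lemma adjoint_exists:
  assumes T: "clinear T" and K: "\<And>x. norm (T x) \<le> K * norm x"
  shows "\<exists>S. is_adjoint T S"
proof -
  define b where "b y n = cinner y (T (ket n))" for y n
  have b_sq: "square_summable (b y)" for y
    unfolding square_summable_def b_def
    by (rule summableI_nonneg_bounded[OF _ sum_cinner_ket_le[OF T K]]) simp
  define S where "S y = Abs_ell2 (b y)" for y
  have coord_S: "coord (S y) = b y" for y
    by (simp add: S_def coord_Abs_ell2[OF b_sq])
  have "cinner (T x) y = cinner x (S y)" for x y
  proof -
    have "(\<lambda>N. cinner (T (truncate N x)) y) \<longlonglongrightarrow> cinner (T x) y"
      using clinear_bounded_linear[OF T K]
      by (intro bounded_linear.tendsto[OF bounded_linear_cinner_left]
          bounded_linear.tendsto[OF _ truncate_tendsto])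
    moreover have "cinner (T (truncate N x)) y = (\<Sum>n<N. coord x n * cnj (coord (S y) n))" for N
      by (simp add: truncate_def clinear_sum[OF T] clinear_cscale[OF T] cinner_sum_left
          cinner_cscale_left coord_S b_def cinner_commute[of y])
    moreover have "(\<lambda>N. \<Sum>n<N. coord x n * cnj (coord (S y) n)) \<longlonglongrightarrow> cinner x (S y)"
      unfolding cinner_coord by (rule summable_LIMSEQ[OF summable_cinner])
    ultimately show ?thesis
      using LIMSEQ_unique by fastforce
  qed
  thus ?thesis
    unfolding is_adjoint_def by blast
qed

definition selfadjoint :: "(ell2 \<Rightarrow> ell2) \<Rightarrow> bool" where
  "selfadjoint Q \<longleftrightarrow> is_adjoint Q Q"

definition positive_op :: "(ell2 \<Rightarrow> ell2) \<Rightarrow> bool" where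
  "positive_op Q \<longleftrightarrow> (\<forall>x. Im (cinner (Q x) x) = 0 \<and> 0 \<le> Re (cinner (Q x) x))"

definition positive_sqrt :: "(ell2 \<Rightarrow> ell2) \<Rightarrow> (ell2 \<Rightarrow> ell2) \<Rightarrow> bool" where
  "positive_sqrt A R \<longleftrightarrow> clinear R \<and> positive_op R \<and> (\<forall>x. R (R x) = A x)"

lemma selfadjoint_cinner_real: "selfadjoint Q \<Longrightarrow> Im (cinner (Q x) x) = 0"
  by (metis Reals_cnj_iff is_adjoint_def cinner_commute complex_is_Real_iff selfadjoint_def)

lemma positive_op_selfadjoint:
  assumes Q: "clinear Q" and pos: "positive_op Q"
  shows "selfadjoint Q"
  unfolding selfadjoint_def is_adjoint_def
proof (intro allI)
  fix x y
  define u where "u = cinner (Q x) y"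
  define v where "v = cinner (Q y) x"
  have im: "Im (cinner (Q z) z) = 0" for z
    using pos by (simp add: positive_op_def)
  have "Im (u + v) = 0"
    using im[of "x + y"] im[of x] im[of y]
    by (simp add: clinear_add[OF Q] cinner_add_left cinner_add_right u_def v_def)
  moreover have "Re u = Re v"
    using im[of "x + cscale \<i> y"] im[of x] im[of y]
    by (simp add: clinear_add[OF Q] clinear_cscale[OF Q] cinner_add_left cinner_add_right
        cinner_cscale_left cinner_cscale_right u_def v_def algebra_simps)
  ultimately have "u = cnj v"
    by (simp add: complex_eq_iff)
  thus "cinner (Q x) y = cinner x (Q y)"
    by (simp add: u_def v_def cinner_commute[of x])
qed

text \<open>If \<open>Qy \<noteq> 0\<close>, then \<open>\<langle>Q(y - l Qy), y - l Qy\<rangle> = -2l\<parallel>Qy\<parallel>\<^sup>2 + l\<^sup>2\<langle>Q\<^sup>2y, Qy\<rangle>\<close>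
  is negative for small \<open>l > 0\<close>.\<close>

lemma positive_op_kernel:
  assumes Q: "clinear Q" and pos: "positive_op Q" and y: "Re (cinner (Q y) y) = 0"
  shows "Q y = 0"
proof (rule ccontr)
  assume "Q y \<noteq> 0"
  define w where "w = Q y"
  define n where "n = (norm w)^2"
  define c where "c = Re (cinner (Q w) w)"
  have "n > 0" using \<open>Q y \<noteq> 0\<close> by (simp add: n_def w_def)
  have "c \<ge> 0" using pos by (simp add: positive_op_def c_def)
  have sa: "cinner (Q w) y = cinner w w"
    using positive_op_selfadjoint[OF Q pos] by (simp add: selfadjoint_def is_adjoint_def w_def)
  have quadratic: "0 \<le> - 2 * l * n + l^2 * c" for l :: real
  proof -
    have "0 \<le> Re (cinner (Q (y - l *\<^sub>R w)) (y - l *\<^sub>R w))"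
      using pos by (simp add: positive_op_def)
    also have "cinner (Q (y - l *\<^sub>R w)) (y - l *\<^sub>R w) =
        cinner (Q y) y - 2 * of_real l * cinner w w + of_real l * of_real l * cinner (Q w) w"
      using sa by (simp add: clinear_diff[OF Q] clinear_scaleR[OF Q] cinner_diff_left cinner_diff_right
          cinner_scaleR_left cinner_scaleR_right algebra_simps w_def)
    finally show ?thesis
      using y by (simp add: n_def c_def cinner_self power2_eq_square)
  qed
  define l where "l = n / (c + 1)"
  have "l > 0" using \<open>n > 0\<close> \<open>c \<ge> 0\<close> by (simp add: l_def)
  have "l * c = n * (c / (c + 1))"
    by (simp add: l_def)
  also have "\<dots> \<le> n * 1"
    using \<open>n > 0\<close> \<open>c \<ge> 0\<close> by (intro mult_left_mono) simp_all
  finally have "l * c < 2 * n"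
    using \<open>n > 0\<close> by simp
  moreover have "0 \<le> l * (- 2 * n + l * c)"
    using quadratic[of l] by (simp add: power2_eq_square algebra_simps)
  ultimately show False
    using \<open>l > 0\<close> by (simp add: zero_le_mult_iff)
qed

lemma positive_sqrt_selfadjoint: "positive_sqrt A R \<Longrightarrow> selfadjoint R"
  by (simp add: positive_sqrt_def positive_op_selfadjoint)

lemma positive_sqrt_bound:
  assumes R: "positive_sqrt A R" and K: "\<And>x. norm (A x) \<le> K * norm x"
  shows "norm (R x) \<le> sqrt K * norm x"
proof -
  have "cinner (R (R x)) x = cinner (R x) (R x)"
    using positive_sqrt_selfadjoint[OF R] by (simp add: selfadjoint_def is_adjoint_def)
  hence "cinner (R x) (R x) = cinner (A x) x"
    using R by (simp add: positive_sqrt_def)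
  hence "(norm (R x))^2 = Re (cinner (A x) x)"
    by (metis Re_complex_of_real cinner_self)
  also have "\<dots> \<le> norm (A x) * norm x"
    using complex_Re_le_cmod norm_cinner order_trans by blast
  also have "\<dots> \<le> K * norm x * norm x"
    using K[of x] by (rule mult_right_mono) simp
  also have "\<dots> = (sqrt K * norm x)^2"
    using norm_bound_nonneg[OF K] by (simp add: power_mult_distrib power2_eq_square)
  finally show ?thesis
    by (rule power2_le_imp_le) (use norm_bound_nonneg[OF K] in simp)
qed

text \<open>With \<open>y = Rx - R'x\<close> one gets \<open>Ry + R'y = (R\<^sup>2 - R'\<^sup>2)x = 0\<close>, so both quadratic
  forms vanish at \<open>y\<close>.\<close>

lemma positive_sqrt_unique:
  assumes R: "positive_sqrt A R" and R': "positive_sqrt A R'"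
    and comm: "\<And>x. R (R' x) = R' (R x)"
  shows "R = R'"
proof
  fix x
  have lin: "clinear R" "clinear R'" and pos: "positive_op R" "positive_op R'"
    using R R' by (simp_all add: positive_sqrt_def)
  define y where "y = R x - R' x"
  have "R y + R' y = 0"
    using R R' by (simp add: y_def clinear_diff[OF lin(1)] clinear_diff[OF lin(2)] comm positive_sqrt_def)
  hence "Re (cinner (R y) y) + Re (cinner (R' y) y) = 0"
    by (metis cinner_add_left cinner_zero_left plus_complex.sel(1) zero_complex.sel(1))
  moreover have "0 \<le> Re (cinner (R y) y)" "0 \<le> Re (cinner (R' y) y)"
    using pos by (simp_all add: positive_op_def)
  ultimately have "R y = 0" "R' y = 0"
    using positive_op_kernel lin pos by (metis add_nonneg_eq_0_iff)+
  hence "cinner y y = 0"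
    using positive_sqrt_selfadjoint[OF R] positive_sqrt_selfadjoint[OF R']
    by (simp add: y_def cinner_diff_left selfadjoint_def is_adjoint_def)
  thus "R x = R' x"
    by (simp add: y_def cinner_self)
qed

lemma clinear_sqrt_series:
  fixes B :: "ell2 \<Rightarrow>\<^sub>L ell2"
  assumes "norm B \<le> 1" "clinear B"
  shows "clinear (sqrt_series B)"
  unfolding clinear_def
proof (intro conjI allI)
  fix c x
  show "sqrt_series B (cscale c x) = cscale c (sqrt_series B x)"
    using assms by (intro sqrt_series_commute[symmetric] bounded_linear_cscale) (simp_all add: clinear_cscale)
qed (simp add: blinfun.add_right)

lemma selfadjoint_blinfun_pow:
  fixes B :: "ell2 \<Rightarrow>\<^sub>L ell2"
  assumes "selfadjoint B"
  shows "selfadjoint (blinfun_pow B k)"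
proof (induct k)
  case (Suc k)
  have "cinner (blinfun_pow B (Suc k) x) y = cinner x (blinfun_pow B (Suc k) y)" for x y
  proof -
    have "cinner (blinfun_pow B (Suc k) x) y = cinner x (blinfun_pow B k (B y))"
      using assms Suc by (simp add: selfadjoint_def is_adjoint_def)
    thus ?thesis
      by (simp only: blinfun_pow_Suc')
  qed
  thus ?case
    by (simp add: selfadjoint_def is_adjoint_def)
qed (simp add: selfadjoint_def is_adjoint_def)

lemma cinner_sqrt_series_left:
  fixes B :: "ell2 \<Rightarrow>\<^sub>L ell2"
  assumes "norm B \<le> 1"
  shows "(\<lambda>k. of_real (sqrt_coeff k) * cinner (blinfun_pow B k x) y) sums cinner (sqrt_series B x) y"
  using bounded_linear.sums[OF bounded_linear_cinner_left sqrt_series_sums[OF assms]]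
  by (simp add: cinner_scaleR_left)

lemma selfadjoint_sqrt_series:
  fixes B :: "ell2 \<Rightarrow>\<^sub>L ell2"
  assumes "norm B \<le> 1" "selfadjoint B"
  shows "selfadjoint (sqrt_series B)"
  unfolding selfadjoint_def is_adjoint_def
proof (intro allI)
  fix x y
  have "(\<lambda>k. of_real (sqrt_coeff k) * cinner x (blinfun_pow B k y)) sums cinner (sqrt_series B x) y"
    using cinner_sqrt_series_left[OF assms(1)] selfadjoint_blinfun_pow[OF assms(2)]
    by (simp add: selfadjoint_def is_adjoint_def)
  moreover have "(\<lambda>k. of_real (sqrt_coeff k) * cinner x (blinfun_pow B k y)) sums cinner x (sqrt_series B y)"
    using bounded_linear.sums[OF bounded_linear_cinner_right sqrt_series_sums[OF assms(1)]]
    by (simp add: cinner_scaleR_right)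
  ultimately show "cinner (sqrt_series B x) y = cinner x (sqrt_series B y)"
    by (rule sums_unique2)
qed

lemma positive_op_sqrt_series:
  fixes B :: "ell2 \<Rightarrow>\<^sub>L ell2"
  assumes "norm B \<le> 1" "selfadjoint B"
  shows "positive_op (sqrt_series B)"
  unfolding positive_op_def
proof (intro allI conjI)
  fix x
  show "Im (cinner (sqrt_series B x) x) = 0"
    by (rule selfadjoint_cinner_real[OF selfadjoint_sqrt_series[OF assms]])
  define r where "r k = Re (cinner (blinfun_pow B k x) x)" for k
  have "(\<lambda>k. sqrt_coeff k * r k) sums Re (cinner (sqrt_series B x) x)"
    using sums_Re[OF cinner_sqrt_series_left[OF assms(1)]] by (simp add: r_def)
  moreover have "\<bar>r k\<bar> \<le> r 0" for k
  proof -
    have "norm (blinfun_pow B k x) \<le> norm x"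
      using norm_blinfun[of "blinfun_pow B k" x]
        mult_right_mono[OF norm_blinfun_pow_le[OF assms(1)], of "norm x" k] by simp
    have "\<bar>r k\<bar> \<le> norm (blinfun_pow B k x) * norm x"
      unfolding r_def using abs_Re_le_cmod norm_cinner order_trans by blast
    also have "\<dots> \<le> norm x * norm x"
      using \<open>norm (blinfun_pow B k x) \<le> norm x\<close> by (rule mult_right_mono) simp
    finally show ?thesis
      by (simp add: r_def cinner_self power2_eq_square)
  qed
  ultimately show "0 \<le> Re (cinner (sqrt_series B x) x)"
    using sqrt_coeff_series_nonneg[of r] by (simp add: sums_iff)
qed

lemma selfadjoint_modulus:
  assumes "is_adjoint T S"
  shows "selfadjoint (S \<circ> T)"
proof -
  have adj: "cinner (T x) y = cinner x (S y)" for x y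
    using assms by (simp add: is_adjoint_def)
  have "cinner (S (T x)) y = cinner x (S (T y))" for x y
    by (metis adj cinner_commute)
  thus ?thesis
    by (simp add: selfadjoint_def is_adjoint_def)
qed

lemma norm_modulus_le:
  assumes S: "is_adjoint T S" and K: "\<And>x. norm (T x) \<le> K * norm x"
  shows "norm ((S \<circ> T) x) \<le> (K * K) * norm x"
  using adjoint_bound[OF S K, of "T x"] mult_left_mono[OF K[of x] norm_bound_nonneg[OF K]]
  by (simp add: mult.assoc)

lemma norm_diff_scaled_modulus_le:
  assumes S: "is_adjoint T S" and K: "\<And>x. norm (T x) \<le> K * norm x"
    and t: "0 \<le> t" "t * K^2 \<le> 1"
  shows "norm (x - t *\<^sub>R S (T x)) \<le> norm x"
proof -
  have "cinner x (S (T x)) = cinner (T x) (T x)"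
    using S by (simp add: is_adjoint_def)
  hence TT: "inner x (S (T x)) = (norm (T x))^2"
    by (simp add: inner_ell2_cinner cinner_self)
  have "t^2 * (norm (S (T x)))^2 \<le> t^2 * (K * norm (T x))^2"
    using adjoint_bound[OF S K, of "T x"] by (intro mult_left_mono power_mono) simp_all
  also have "\<dots> = (t * K^2) * (t * (norm (T x))^2)"
    by (simp add: power_mult_distrib power2_eq_square)
  also have "\<dots> \<le> 1 * (t * (norm (T x))^2)"
    using t by (intro mult_right_mono) simp_all
  finally have "t^2 * (norm (S (T x)))^2 \<le> t * (norm (T x))^2"
    by simp
  moreover have "(norm (x - t *\<^sub>R S (T x)))^2 =
      (norm x)^2 - 2 * t * (norm (T x))^2 + t^2 * (norm (S (T x)))^2"
    by (simp add: power2_norm_eq_inner inner_diff_left inner_diff_right inner_commute[of "S (T x)" x]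
        TT algebra_simps) (simp add: power2_eq_square)
  ultimately have "(norm (x - t *\<^sub>R S (T x)))^2 \<le> (norm x)^2"
    using mult_nonneg_nonneg[OF t(1) zero_le_power2[of "norm (T x)"]] by linarith
  thus ?thesis
    by (rule power2_le_imp_le) simp
qed

lemma modulus_contraction:
  assumes T: "clinear T" "\<And>x. norm (T x) \<le> K * norm x" and S: "is_adjoint T S"
    and t: "0 \<le> t" "t * K^2 \<le> 1"
  obtains B :: "ell2 \<Rightarrow>\<^sub>L ell2"
  where "\<And>x. B x = x - t *\<^sub>R S (T x)" "norm B \<le> 1" "clinear B" "selfadjoint B"
proof
  have lin: "clinear (S \<circ> T)"
    using T(1) adjoint_clinear[OF S] by (simp add: clinear_def)
  have "bounded_linear (S \<circ> T)"
    by (rule clinear_bounded_linear[OF lin norm_modulus_le[OF S T(2)]])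
  hence "bounded_linear (\<lambda>x. x - t *\<^sub>R S (T x))"
    unfolding comp_def
    by (intro bounded_linear_sub bounded_linear_ident bounded_linear_compose[OF bounded_linear_scaleR_right])
  thus B: "Blinfun (\<lambda>x. x - t *\<^sub>R S (T x)) x = x - t *\<^sub>R S (T x)" for x
    by (simp add: bounded_linear_Blinfun_apply)
  have "norm (Blinfun (\<lambda>x. x - t *\<^sub>R S (T x)) x) \<le> 1 * norm x" for x
    using norm_diff_scaled_modulus_le[OF S T(2) t, of x] by (simp add: B)
  thus "norm (Blinfun (\<lambda>x. x - t *\<^sub>R S (T x))) \<le> 1"
    by (rule norm_blinfun_bound[OF zero_le_one])
  have "S (T (cscale c x)) = cscale c (S (T x))" for c x
    using clinear_cscale[OF lin] by simp
  thus "clinear (Blinfun (\<lambda>x. x - t *\<^sub>R S (T x)))"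
    unfolding clinear_def by (simp add: blinfun.add_right B cscale_diff_right cscale_scaleR_commute)
  show "selfadjoint (Blinfun (\<lambda>x. x - t *\<^sub>R S (T x)))"
    using selfadjoint_modulus[OF S]
    by (simp add: selfadjoint_def is_adjoint_def B cinner_diff_left cinner_diff_right
        cinner_scaleR_left cinner_scaleR_right)
qed

text \<open>The square root of \<open>T\<^sup>*T\<close> is \<open>t\<^sup>-\<^sup>1\<^sup>/\<^sup>2 \<surd>(I - B)\<close> for the contraction
  \<open>B = I - t T\<^sup>*T\<close>; as a limit of polynomials in \<open>T\<^sup>*T\<close> it commutes with everything
  that commutes with \<open>T\<^sup>*T\<close>.\<close>

lemma positive_sqrt_modulus_exists:
  assumes T: "clinear T" "\<And>x. norm (T x) \<le> K * norm x" and S: "is_adjoint T S"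
  obtains R where "positive_sqrt (S \<circ> T) R"
    and "\<And>Q x. bounded_linear Q \<Longrightarrow> (\<And>x. Q (S (T x)) = S (T (Q x))) \<Longrightarrow> Q (R x) = R (Q x)"
proof -
  define t where "t = 1 / (K^2 + 1)"
  have "0 < K^2 + 1"
    using zero_le_power2[of K] by linarith
  hence t: "0 < t" "t * K^2 \<le> 1"
    by (simp_all add: t_def)
  obtain B :: "ell2 \<Rightarrow>\<^sub>L ell2" where B: "\<And>x. B x = x - t *\<^sub>R S (T x)"
    and norm_B: "norm B \<le> 1" and "clinear B" "selfadjoint B"
    using modulus_contraction[OF T S less_imp_le[OF t(1)] t(2)] by blast
  have sqrt_sq: "sqrt_series B (sqrt_series B x) = t *\<^sub>R S (T x)" for x
    using arg_cong[OF sqrt_series_squared[OF norm_B], of "\<lambda>F. blinfun_apply F x"]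
    by (simp add: B blinfun.diff_left)
  define R where "R x = (1 / sqrt t) *\<^sub>R sqrt_series B x" for x
  show thesis
  proof
    show "positive_sqrt (S \<circ> T) R"
      unfolding positive_sqrt_def
    proof (intro conjI allI)
      have "clinear (sqrt_series B)"
        by (rule clinear_sqrt_series[OF norm_B \<open>clinear B\<close>])
      thus "clinear R"
        unfolding clinear_def R_def
        by (simp add: blinfun.add_right clinear_cscale scaleR_add_right cscale_scaleR_commute)
      show "positive_op R"
        using positive_op_sqrt_series[OF norm_B \<open>selfadjoint B\<close>] t(1)
        by (simp add: positive_op_def R_def cinner_scaleR_left)
      show "R (R x) = (S \<circ> T) x" for x
        using t(1) by (simp add: R_def blinfun.scaleR_right sqrt_sq)
    qed
  next
    fix Q x
    assume Q: "bounded_linear Q" "\<And>x. Q (S (T x)) = S (T (Q x))"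
    have "Q (B y) = B (Q y)" for y
      using Q by (simp add: B linear_diff linear_scale bounded_linear.linear)
    hence "Q (sqrt_series B x) = sqrt_series B (Q x)"
      by (rule sqrt_series_commute[OF norm_B Q(1)])
    thus "Q (R x) = R (Q x)"
      by (simp add: R_def linear_scale[OF bounded_linear.linear[OF Q(1)]])
  qed
qed

lemma positive_sqrt_modulus_ex1:
  assumes T: "clinear T" "\<And>x. norm (T x) \<le> K * norm x" and S: "is_adjoint T S"
  shows "\<exists>!R. positive_sqrt (S \<circ> T) R"
proof -
  obtain R where R: "positive_sqrt (S \<circ> T) R"
    and comm: "\<And>Q x. bounded_linear Q \<Longrightarrow> (\<And>x. Q (S (T x)) = S (T (Q x))) \<Longrightarrow> Q (R x) = R (Q x)"
    using positive_sqrt_modulus_exists[OF assms] by blast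
  have "R' = R" if R': "positive_sqrt (S \<circ> T) R'" for R'
  proof (rule positive_sqrt_unique[OF R' R])
    have "bounded_linear R'"
      using R' positive_sqrt_bound[OF R' norm_modulus_le[OF S T(2)]]
      by (intro clinear_bounded_linear) (simp_all add: positive_sqrt_def)
    moreover have "R' (S (T x)) = S (T (R' x))" for x
    proof -
      have RR: "R' (R' y) = S (T y)" for y
        using R' by (simp add: positive_sqrt_def)
      show ?thesis
        by (simp only: flip: RR)
    qed
    ultimately show "R' (R x) = R (R' x)" for x
      by (rule comm)
  qed
  thus ?thesis
    using R by blast
qed

lemma norm_positive_sqrt_modulus:
  assumes S: "is_adjoint T S" and R: "positive_sqrt (S \<circ> T) R"
  shows "norm (R x) = norm (T x)"
proof -
  have "cinner (R x) (R x) = cinner (R (R x)) x"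
    using positive_sqrt_selfadjoint[OF R] by (simp add: selfadjoint_def is_adjoint_def)
  also have "\<dots> = cnj (cinner x (S (T x)))"
    using R by (simp add: positive_sqrt_def cinner_commute[of x "S (T x)"])
  also have "\<dots> = cnj (cinner (T x) (T x))"
    using S by (simp add: is_adjoint_def)
  finally have "complex_of_real ((norm (R x))^2) = of_real ((norm (T x))^2)"
    by (simp only: cinner_self complex_cnj_complex_of_real)
  thus ?thesis
    by (simp only: of_real_eq_iff) (simp add: power2_eq_iff_nonneg)
qed

section \<open>The Hardy space as a copy of \<open>\<ell>\<^sup>2\<close>\<close>

lemma mem_unit_disc: "z \<in> unit_disc \<longleftrightarrow> cmod z < 1"
  by (simp add: unit_disc_def)

lemma has_integral_cis_int:
  fixes k :: int
  shows "((\<lambda>t. cis (of_int k * t)) has_integral (if k = 0 then of_real (2*pi) else 0)) {0..2*pi}"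
proof (cases "k = 0")
  case True
  thus ?thesis
    using has_integral_const_real[of "1::complex" 0 "2*pi"] by (simp add: scaleR_conv_of_real)
next
  case False
  define F where "F t = cis (of_int k * t) / (\<i> * of_int k)" for t
  have "(F has_vector_derivative cis (of_int k * t)) (at t within {0..2*pi})" for t
  proof -
    have "((\<lambda>t. of_int k * t) has_derivative (\<lambda>h. of_int k * h)) (at t within {0..2*pi})"
      by (intro derivative_eq_intros) auto
    from has_derivative_cis[OF this]
    have "((\<lambda>t. cis (of_int k * t)) has_vector_derivative \<i> * of_int k * cis (of_int k * t))
        (at t within {0..2*pi})"
      by (simp add: has_vector_derivative_def scaleR_conv_of_real mult_ac)
    from has_vector_derivative_divide[OF this, of "\<i> * of_int k"] show ?thesis
      unfolding F_def using False by simp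
  qed
  hence "((\<lambda>t. cis (of_int k * t)) has_integral (F (2*pi) - F 0)) {0..2*pi}"
    by (intro fundamental_theorem_of_calculus) simp_all
  moreover have "cis (of_int k * (2*pi)) = 1"
    using cis_multiple_2pi[of "of_int k"] by (simp add: mult.commute)
  ultimately show ?thesis
    using False by (simp add: F_def)
qed

lemma has_integral_norm_sum_cis_sq:
  "((\<lambda>t. (cmod (\<Sum>n<N. c n * cis (real n * t)))^2) has_integral
      (2*pi * (\<Sum>n<N. (cmod (c n))^2))) {0..2*pi}"
proof -
  have eq: "complex_of_real ((cmod (\<Sum>n<N. c n * cis (real n * t)))^2) =
        (\<Sum>m<N. \<Sum>n<N. (c m * cnj (c n)) * cis (of_int (int m - int n) * t))" for t
  proof -
    have "complex_of_real ((cmod (\<Sum>n<N. c n * cis (real n * t)))^2) =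
          (\<Sum>n<N. c n * cis (real n * t)) * cnj (\<Sum>n<N. c n * cis (real n * t))"
      by (rule complex_norm_square)
    also have "\<dots> = (\<Sum>m<N. \<Sum>n<N. (c m * cis (real m * t)) * (cnj (c n) * cis (- (real n * t))))"
      by (simp add: sum_product cnj_sum cis_cnj)
    also have "\<dots> = (\<Sum>m<N. \<Sum>n<N. (c m * cnj (c n)) * cis (of_int (int m - int n) * t))"
      by (intro sum.cong refl) (simp add: cis_mult algebra_simps)
    finally show ?thesis .
  qed
  have "((\<lambda>t. \<Sum>m<N. \<Sum>n<N. (c m * cnj (c n)) * cis (of_int (int m - int n) * t)) has_integral
        (\<Sum>m<N. \<Sum>n<N. (c m * cnj (c n)) * (if int m - int n = 0 then of_real (2*pi) else 0))) {0..2*pi}"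
    by (intro has_integral_sum finite_lessThan has_integral_mult_right has_integral_cis_int)
  also have "(\<Sum>m<N. \<Sum>n<N. (c m * cnj (c n)) * (if int m - int n = 0 then of_real (2*pi) else 0)) =
             (\<Sum>m<N. (c m * cnj (c m)) * of_real (2*pi))"
  proof (rule sum.cong[OF refl])
    fix m assume "m \<in> {..<N}"
    have "(\<Sum>n<N. (c m * cnj (c n)) * (if int m - int n = 0 then of_real (2*pi) else 0)) =
          (\<Sum>n<N. if n = m then (c m * cnj (c n)) * of_real (2*pi) else 0)"
      by (intro sum.cong refl) auto
    also have "\<dots> = (c m * cnj (c m)) * of_real (2*pi)" using \<open>m \<in> {..<N}\<close> by (simp add: sum.delta)
    finally show "(\<Sum>n<N. (c m * cnj (c n)) * (if int m - int n = 0 then of_real (2*pi) else 0)) =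
          (c m * cnj (c m)) * of_real (2*pi)" .
  qed
  also have "\<dots> = of_real (2*pi * (\<Sum>n<N. (cmod (c n))^2))"
    by (simp add: sum_distrib_left mult.commute flip: complex_norm_square)
  finally have "((\<lambda>t. complex_of_real ((cmod (\<Sum>n<N. c n * cis (real n * t)))^2)) has_integral
      of_real (2*pi * (\<Sum>n<N. (cmod (c n))^2))) {0..2*pi}"
    by (simp only: eq)
  from has_integral_linear[OF this bounded_linear_Re] show ?thesis
    by (simp add: o_def)
qed

lemma summable_power2_nonneg:
  assumes "summable (\<lambda>n. u n :: real)" "\<And>n. 0 \<le> u n"
  shows "summable (\<lambda>n. (u n)^2)"
proof -
  have "(\<lambda>n. u n) \<longlonglongrightarrow> 0" by (rule summable_LIMSEQ_zero[OF assms(1)])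
  hence "Bseq u" by (rule convergent_imp_Bseq[OF convergentI])
  then obtain M where M: "\<And>n. norm (u n) \<le> M" by (auto simp: Bseq_def)
  show ?thesis
  proof (rule summable_comparison_test'[of "\<lambda>n. M * u n"])
    show "summable (\<lambda>n. M * u n)" by (rule summable_mult[OF assms(1)])
    fix n show "norm ((u n)^2) \<le> M * u n"
      using M[of n] assms(2)[of n] by (simp add: power2_eq_square mult_right_mono)
  qed
qed

text \<open>By dominated convergence from the partial sums.\<close>

lemma integral_norm_power_series_circle:
  fixes a :: "nat \<Rightarrow> complex" and r :: real
  assumes sums: "\<And>t. (\<lambda>n. a n * (of_real r * cis t)^n) sums g t"
    and abs: "summable (\<lambda>n. cmod (a n) * r^n)" and r: "0 \<le> r"
  shows "summable (\<lambda>n. (cmod (a n))^2 * r^(2*n))"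
    and "integral {0..2*pi} (\<lambda>t. (cmod (g t))^2) = 2*pi * (\<Sum>n. (cmod (a n))^2 * r^(2*n))"
proof -
  define c where "c n = a n * of_real (r^n)" for n
  have cm: "cmod (c n) = cmod (a n) * r^n" for n by (simp add: c_def norm_mult r norm_power)
  have sq: "(cmod (c n))^2 = (cmod (a n))^2 * r^(2*n)" for n
    by (simp add: cm power_mult_distrib power_mult[symmetric] mult.commute)
  show ssum: "summable (\<lambda>n. (cmod (a n))^2 * r^(2*n))"
    using summable_power2_nonneg[OF abs] r by (simp add: sq[symmetric] cm)
  have trm: "a n * (of_real r * cis t)^n = c n * cis (real n * t)" for n t
    by (simp add: c_def power_mult_distrib Complex.DeMoivre)
  define S where "S k t = (\<Sum>n<k. c n * cis (real n * t))" for k t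
  define M where "M = (\<Sum>n. cmod (a n) * r^n)"
  have SM: "cmod (S k t) \<le> M" for k t
  proof -
    have "cmod (S k t) \<le> (\<Sum>n<k. cmod (c n * cis (real n * t)))" unfolding S_def by (rule norm_sum)
    also have "\<dots> = (\<Sum>n<k. cmod (a n) * r^n)" by (simp add: norm_mult cm)
    also have "\<dots> \<le> M" unfolding M_def by (rule sum_le_suminf[OF abs]) (use r in auto)
    finally show ?thesis .
  qed
  have conv: "(\<lambda>k. (cmod (S k t))^2) \<longlonglongrightarrow> (cmod (g t))^2" for t
  proof -
    have "(\<lambda>k. S k t) \<longlonglongrightarrow> g t" using sums[of t] unfolding sums_def S_def by (simp add: trm)
    thus ?thesis by (intro tendsto_intros)
  qed
  have int: "((\<lambda>t. (cmod (S k t))^2) has_integral (2*pi * (\<Sum>n<k. (cmod (c n))^2))) {0..2*pi}" for k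
    unfolding S_def by (rule has_integral_norm_sum_cis_sq)
  have dc: "(\<lambda>k. integral {0..2*pi} (\<lambda>t. (cmod (S k t))^2)) \<longlonglongrightarrow> integral {0..2*pi} (\<lambda>t. (cmod (g t))^2)"
  proof (rule dominated_convergence(2))
    show "(\<lambda>t. (cmod (S k t))^2) integrable_on {0..2*pi}" for k using int by blast
    show "(\<lambda>t. M^2) integrable_on {0..2*pi}" by (rule integrable_const_ivl)
    show "norm ((cmod (S k t))^2) \<le> M^2" for k t
      using SM[of k t] by (simp add: power_mono)
    show "(\<lambda>k. (cmod (S k t))^2) \<longlonglongrightarrow> (cmod (g t))^2" for t by (rule conv)
  qed
  moreover have "(\<lambda>k. integral {0..2*pi} (\<lambda>t. (cmod (S k t))^2)) \<longlonglongrightarrow> 2*pi * (\<Sum>n. (cmod (a n))^2 * r^(2*n))"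
  proof -
    have eqi: "integral {0..2*pi} (\<lambda>t. (cmod (S k t))^2) = 2*pi * (\<Sum>n<k. (cmod (c n))^2)" for k
      by (rule integral_unique[OF int])
    have "summable (\<lambda>n. (cmod (c n))^2)" using ssum by (simp add: sq)
    hence "(\<lambda>k. \<Sum>n<k. (cmod (c n))^2) \<longlonglongrightarrow> (\<Sum>n. (cmod (c n))^2)" by (rule summable_LIMSEQ)
    hence "(\<lambda>k. 2*pi * (\<Sum>n<k. (cmod (c n))^2)) \<longlonglongrightarrow> 2*pi * (\<Sum>n. (cmod (c n))^2)"
      by (rule tendsto_mult_left)
    thus ?thesis by (simp only: eqi sq)
  qed
  ultimately show "integral {0..2*pi} (\<lambda>t. (cmod (g t))^2) = 2*pi * (\<Sum>n. (cmod (a n))^2 * r^(2*n))"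
    by (rule LIMSEQ_unique)
qed

definition taylor_coeff :: "(complex \<Rightarrow> complex) \<Rightarrow> nat \<Rightarrow> complex" where
  "taylor_coeff f n = (deriv ^^ n) f 0 / fact n"

lemma taylor_coeff_sums:
  assumes "f holomorphic_on unit_disc" "z \<in> unit_disc"
  shows "(\<lambda>n. taylor_coeff f n * z^n) sums f z"
  using holomorphic_power_series[of f 0 1 z] assms by (simp add: unit_disc_def taylor_coeff_def)

lemma summable_norm_taylor_coeff:
  assumes f: "f holomorphic_on unit_disc" and r: "0 \<le> r" "r < 1"
  shows "summable (\<lambda>n. cmod (taylor_coeff f n) * r^n)"
proof -
  define \<rho> where "\<rho> = (1 + r) / 2"
  have "of_real \<rho> \<in> unit_disc" using r by (simp only: mem_unit_disc norm_of_real) (simp add: \<rho>_def)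
  hence "summable (\<lambda>n. taylor_coeff f n * (of_real \<rho>)^n)" using taylor_coeff_sums[OF f] by (auto simp: sums_iff)
  moreover have "norm (of_real r :: complex) < norm (of_real \<rho> :: complex)" using r
    by (simp only: norm_of_real) (simp add: \<rho>_def)
  ultimately have "summable (\<lambda>n. norm (taylor_coeff f n * (of_real r)^n))" by (rule powser_insidea)
  thus ?thesis using r by (simp add: norm_mult norm_power)
qed

lemma int_mean_taylor_coeff:
  assumes f: "f holomorphic_on unit_disc" and r: "0 \<le> r" "r < 1"
  shows "summable (\<lambda>n. (cmod (taylor_coeff f n))^2 * r^(2*n))"
    and "int_mean f r = (\<Sum>n. (cmod (taylor_coeff f n))^2 * r^(2*n))"
proof -
  have sums: "(\<lambda>n. taylor_coeff f n * (of_real r * cis t)^n) sums f (of_real r * cis t)" for t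
    using r by (intro taylor_coeff_sums[OF f]) (simp add: mem_unit_disc norm_mult)
  note P = integral_norm_power_series_circle[OF sums summable_norm_taylor_coeff[OF f r] r(1)]
  show "summable (\<lambda>n. (cmod (taylor_coeff f n))^2 * r^(2*n))" by (rule P(1))
  show "int_mean f r = (\<Sum>n. (cmod (taylor_coeff f n))^2 * r^(2*n))"
    unfolding int_mean_def P(2) by simp
qed

lemma SUP_power_series_eq_suminf:
  fixes c :: "nat \<Rightarrow> real"
  assumes c: "\<And>n. 0 \<le> c n" and sr: "\<And>r. 0 \<le> r \<Longrightarrow> r < 1 \<Longrightarrow> summable (\<lambda>n. c n * r^(2*n))"
    and bdd: "bdd_above ((\<lambda>r. \<Sum>n. c n * r^(2*n)) ` {0..<1})"
  shows "summable c" and "(SUP r\<in>{0..<1}. \<Sum>n. c n * r^(2*n)) = (\<Sum>n. c n)"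
proof -
  define G where "G r = (\<Sum>n. c n * r^(2*n))" for r :: real
  define S where "S = (SUP r\<in>{0..<1}. G r)"
  define rk where "rk k = 1 - 1 / (real k + 2)" for k :: nat
  have rk: "0 \<le> rk k" "rk k < 1" for k by (auto simp: rk_def field_simps)
  have rk_lim: "rk \<longlonglongrightarrow> 1"
  proof -
    have "(\<lambda>k. inverse (real (Suc (Suc k)))) \<longlonglongrightarrow> 0"
      by (rule LIMSEQ_Suc[OF LIMSEQ_inverse_real_of_nat])
    hence "(\<lambda>k. 1 / (real k + 2)) \<longlonglongrightarrow> 0" by (simp add: divide_inverse add.commute)
    hence "(\<lambda>k. 1 - 1 / (real k + 2)) \<longlonglongrightarrow> 1 - 0" by (intro tendsto_intros)
    thus ?thesis unfolding rk_def by simp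
  qed
  have bddG: "bdd_above (G ` {0..<1})" using bdd by (simp add: G_def)
  have part: "(\<Sum>n<N. c n) \<le> S" for N
  proof -
    have "(\<lambda>k. \<Sum>n<N. c n * (rk k)^(2*n)) \<longlonglongrightarrow> (\<Sum>n<N. c n * 1^(2*n))"
      by (intro tendsto_intros rk_lim)
    moreover have "(\<Sum>n<N. c n * (rk k)^(2*n)) \<le> S" for k
    proof -
      have "(\<Sum>n<N. c n * (rk k)^(2*n)) \<le> G (rk k)"
        unfolding G_def by (rule sum_le_suminf[OF sr[OF rk]]) (use c rk in auto)
      also have "\<dots> \<le> S" unfolding S_def by (rule cSUP_upper[OF _ bddG]) (use rk in auto)
      finally show ?thesis .
    qed
    ultimately show ?thesis by (intro LIMSEQ_le_const2) auto
  qed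
  show sc: "summable c" by (rule summableI_nonneg_bounded[OF c part])
  have "S \<le> (\<Sum>n. c n)" unfolding S_def
  proof (rule cSUP_least)
    fix r assume "r \<in> {0..<1::real}"
    hence r: "0 \<le> r" "r \<le> 1" by auto
    show "G r \<le> (\<Sum>n. c n)" unfolding G_def
    proof (rule suminf_le[OF _ sr sc])
      fix n show "c n * r^(2*n) \<le> c n" using c[of n] r by (simp add: mult_left_le power_le_one)
    qed (use \<open>r \<in> {0..<1}\<close> in auto)
  qed auto
  moreover have "(\<Sum>n. c n) \<le> S" by (rule suminf_le_const[OF sc part])
  ultimately show "(SUP r\<in>{0..<1}. \<Sum>n. c n * r^(2*n)) = (\<Sum>n. c n)"
    unfolding S_def G_def by simp
qed

lemma hardy2_taylor_coeff:
  assumes "hardy2 f"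
  shows "square_summable (taylor_coeff f)" and "H2_norm f = sqrt (\<Sum>n. (cmod (taylor_coeff f n))^2)"
proof -
  have f: "f holomorphic_on unit_disc" and bdd: "bdd_above (int_mean f ` {0..<1})"
    using assms by (auto simp: hardy2_def)
  have im: "int_mean f r = (\<Sum>n. (cmod (taylor_coeff f n))^2 * r^(2*n))" if "r \<in> {0..<1}" for r
    using int_mean_taylor_coeff(2)[OF f] that by auto
  have bdd': "bdd_above ((\<lambda>r. \<Sum>n. (cmod (taylor_coeff f n))^2 * r^(2*n)) ` {0..<1})"
    using bdd by (metis (no_types, lifting) image_cong im)
  note SP = SUP_power_series_eq_suminf[of "\<lambda>n. (cmod (taylor_coeff f n))^2", OF _ int_mean_taylor_coeff(1)[OF f] bdd']
  show "square_summable (taylor_coeff f)" using SP(1) by (simp add: square_summable_def)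
  have "(SUP r\<in>{0..<1}. int_mean f r) = (SUP r\<in>{0..<1}. \<Sum>n. (cmod (taylor_coeff f n))^2 * r^(2*n))"
    by (rule SUP_cong) (simp_all add: im)
  thus "H2_norm f = sqrt (\<Sum>n. (cmod (taylor_coeff f n))^2)" by (simp add: H2_norm_def SP(2))
qed

definition to_H2 :: "ell2 \<Rightarrow> complex \<Rightarrow> complex" where
  "to_H2 x = (\<lambda>z. if z \<in> unit_disc then (\<Sum>n. coord x n * z^n) else 0)"

definition of_H2 :: "(complex \<Rightarrow> complex) \<Rightarrow> ell2" where
  "of_H2 f = Abs_ell2 (taylor_coeff f)"

lemma summable_norm_to_H2:
  assumes z: "z \<in> unit_disc"
  shows "summable (\<lambda>n. cmod (coord x n * z^n))"
proof (rule summable_comparison_test'[of "\<lambda>n. norm x * (cmod z)^n"])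
  show "summable (\<lambda>n. norm x * (cmod z)^n)"
    using z by (intro summable_mult summable_geometric) (simp add: mem_unit_disc)
  fix n show "norm (cmod (coord x n * z^n)) \<le> norm x * (cmod z)^n"
    by (simp add: norm_mult norm_power mult_right_mono norm_coord_le)
qed

lemma summable_to_H2: "z \<in> unit_disc \<Longrightarrow> summable (\<lambda>n. coord x n * z^n)"
  by (rule summable_norm_cancel[OF summable_norm_to_H2])

lemma to_H2_sums: "z \<in> unit_disc \<Longrightarrow> (\<lambda>n. coord x n * z^n) sums to_H2 x z"
  using summable_to_H2[of z x] by (simp add: to_H2_def summable_sums)

lemma holomorphic_to_H2: "to_H2 x holomorphic_on unit_disc"
  unfolding unit_disc_def
  by (rule power_series_holomorphic[of 0 1 "coord x"]) (use to_H2_sums in \<open>simp add: unit_disc_def\<close>)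

lemma taylor_coeff_to_H2: "taylor_coeff (to_H2 x) n = coord x n"
proof -
  define F where "F = Abs_fps (coord x)"
  have "(1/2::complex) \<in> unit_disc" by (simp add: mem_unit_disc)
  hence "summable (\<lambda>n. fps_nth F n * (1/2::complex)^n)" using summable_to_H2 by (simp add: F_def)
  hence "conv_radius (fps_nth F) \<ge> norm (1/2::complex)" by (rule conv_radius_geI)
  hence rad: "fps_conv_radius F > 0" unfolding fps_conv_radius_def
    by (metis ereal_less(2) less_le_trans norm_divide norm_one norm_numeral zero_less_divide_1_iff zero_less_numeral)
  have "eventually (\<lambda>z. eval_fps F z = to_H2 x z) (nhds 0)"
    unfolding eventually_nhds
  proof (intro exI conjI ballI)
    show "open unit_disc" "(0::complex) \<in> unit_disc" by (simp_all add: unit_disc_def)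
    fix z assume "z \<in> unit_disc"
    thus "eval_fps F z = to_H2 x z" by (simp add: eval_fps_def F_def to_H2_def)
  qed
  hence "to_H2 x has_fps_expansion F" using rad by (simp add: has_fps_expansion_def)
  from fps_nth_fps_expansion[OF this, of n] show ?thesis by (simp add: F_def taylor_coeff_def)
qed

lemma hardy2_to_H2: "hardy2 (to_H2 x)"
  unfolding hardy2_def
proof
  show "to_H2 x holomorphic_on unit_disc" by (rule holomorphic_to_H2)
  show "bdd_above (int_mean (to_H2 x) ` {0..<1})"
  proof (rule bdd_aboveI2)
    fix r :: real assume r: "r \<in> {0..<1}"
    have "int_mean (to_H2 x) r = (\<Sum>n. (cmod (coord x n))^2 * r^(2*n))"
      using int_mean_taylor_coeff(2)[OF holomorphic_to_H2, of r] r by (simp add: taylor_coeff_to_H2)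
    also have "\<dots> \<le> (\<Sum>n. (cmod (coord x n))^2)"
    proof (rule suminf_le)
      fix n show "(cmod (coord x n))^2 * r^(2*n) \<le> (cmod (coord x n))^2"
        using r by (simp add: mult_left_le power_le_one)
    next
      show "summable (\<lambda>n. (cmod (coord x n))^2 * r^(2*n))"
        using int_mean_taylor_coeff(1)[OF holomorphic_to_H2, of r] r by (simp add: taylor_coeff_to_H2)
    qed (rule summable_coord)
    finally show "int_mean (to_H2 x) r \<le> (\<Sum>n. (cmod (coord x n))^2)" .
  qed
qed

lemma to_H2_in_H2: "to_H2 x \<in> H2"
  unfolding H2_def using hardy2_to_H2 by (simp add: to_H2_def)

lemma H2_norm_to_H2: "H2_norm (to_H2 x) = norm x"
  using hardy2_taylor_coeff(2)[OF hardy2_to_H2] by (simp add: taylor_coeff_to_H2 norm_ell2_def)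

lemma of_H2_to_H2: "of_H2 (to_H2 x) = x"
proof -
  have "taylor_coeff (to_H2 x) = coord x" by (simp add: fun_eq_iff taylor_coeff_to_H2)
  thus ?thesis by (simp add: of_H2_def coord_inverse)
qed

lemma coord_of_H2: "f \<in> H2 \<Longrightarrow> coord (of_H2 f) = taylor_coeff f"
  unfolding H2_def using hardy2_taylor_coeff(1)[of f] by (simp add: of_H2_def Abs_ell2_inverse)

lemma to_H2_of_H2: assumes "f \<in> H2" shows "to_H2 (of_H2 f) = f"
proof
  fix z
  show "to_H2 (of_H2 f) z = f z"
  proof (cases "z \<in> unit_disc")
    case True
    have hol: "f holomorphic_on unit_disc" using assms by (simp add: H2_def hardy2_def)
    show ?thesis using taylor_coeff_sums[OF hol True] True by (simp add: to_H2_def coord_of_H2[OF assms] sums_iff)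
  next
    case False thus ?thesis using assms by (simp add: to_H2_def H2_def)
  qed
qed

lemma H2_norm_eq_norm_of_H2: "f \<in> H2 \<Longrightarrow> H2_norm f = norm (of_H2 f)"
  by (metis H2_norm_to_H2 to_H2_of_H2)

lemma to_H2_add_cscale: "to_H2 (x + cscale c y) = (\<lambda>z. to_H2 x z + c * to_H2 y z)"
proof
  fix z
  show "to_H2 (x + cscale c y) z = to_H2 x z + c * to_H2 y z"
  proof (cases "z \<in> unit_disc")
    case True
    have "(\<lambda>n. coord x n * z^n + c * (coord y n * z^n)) sums (to_H2 x z + c * to_H2 y z)"
      by (intro sums_add sums_mult to_H2_sums True)
    moreover have "(\<lambda>n. coord (x + cscale c y) n * z^n) sums to_H2 (x + cscale c y) z" by (rule to_H2_sums[OF True])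
    ultimately show ?thesis by (simp add: algebra_simps sums_iff)
  next
    case False thus ?thesis by (simp add: to_H2_def)
  qed
qed

lemma to_H2_add: "to_H2 (x + y) = (\<lambda>z. to_H2 x z + to_H2 y z)"
  using to_H2_add_cscale[of x 1 y] by simp

lemma to_H2_zero: "to_H2 0 = (\<lambda>z. 0)"
  by (simp add: to_H2_def fun_eq_iff)

lemma to_H2_cscale: "to_H2 (cscale c y) = (\<lambda>z. c * to_H2 y z)"
  using to_H2_add_cscale[of 0 c y] by (simp add: to_H2_zero)

lemma H2_lincomb_eq_to_H2:
  assumes "f \<in> H2" "g \<in> H2"
  shows "(\<lambda>z. f z + c * g z) = to_H2 (of_H2 f + cscale c (of_H2 g))"
  using to_H2_add_cscale[of "of_H2 f" c "of_H2 g"] by (simp add: to_H2_of_H2 assms)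

lemma H2_add: assumes "f \<in> H2" "g \<in> H2"
  shows "(\<lambda>z. f z + g z) \<in> H2" "of_H2 (\<lambda>z. f z + g z) = of_H2 f + of_H2 g"
  using H2_lincomb_eq_to_H2[OF assms, of 1] by (simp_all add: to_H2_in_H2 of_H2_to_H2)

lemma H2_cscale: assumes "f \<in> H2"
  shows "(\<lambda>z. c * f z) \<in> H2" "of_H2 (\<lambda>z. c * f z) = cscale c (of_H2 f)"
  using to_H2_cscale[of c "of_H2 f"] by (simp_all add: to_H2_of_H2 assms) (metis to_H2_in_H2, metis of_H2_to_H2)

lemma cinner_polarization: "(1/4) * (\<Sum>k<(4::nat). \<i>^k * complex_of_real ((norm (x + cscale (\<i>^k) y))^2)) = cinner x y"
proof -
  have e: "complex_of_real ((norm (x + cscale c y))^2) = cinner x x + cnj c * cinner x y + c * cinner y x + c * cnj c * cinner y y" for c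
  proof -
    have "complex_of_real ((norm (x + cscale c y))^2) = cinner (x + cscale c y) (x + cscale c y)"
      by (rule cinner_self[symmetric])
    also have "\<dots> = cinner x x + cnj c * cinner x y + c * cinner y x + c * cnj c * cinner y y"
      by (simp add: cinner_add_left cinner_add_right cinner_cscale_left cinner_cscale_right algebra_simps)
    finally show ?thesis .
  qed
  show ?thesis
    unfolding e by (simp add: numeral_eq_Suc lessThan_Suc algebra_simps)
qed

lemma H2_inner_eq_cinner:
  assumes "f \<in> H2" "g \<in> H2"
  shows "H2_inner f g = cinner (of_H2 f) (of_H2 g)"
proof -
  have eqk: "H2_norm (\<lambda>z. f z + \<i>^k * g z) = norm (of_H2 f + cscale (\<i>^k) (of_H2 g))" for k
    by (simp add: H2_lincomb_eq_to_H2[OF assms] H2_norm_to_H2)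
  have "H2_inner f g = (1/4) * (\<Sum>k<(4::nat). \<i>^k * complex_of_real ((norm (of_H2 f + cscale (\<i>^k) (of_H2 g)))^2))"
    unfolding H2_inner_def by (simp only: eqk)
  thus ?thesis by (simp only: cinner_polarization)
qed

lemma square_summable_cnj_power: assumes "w \<in> unit_disc" shows "square_summable (\<lambda>n. cnj (w^n))"
proof -
  have "summable (\<lambda>n. ((cmod w)^2)^n)" using assms
    by (intro summable_geometric) (simp add: mem_unit_disc abs_square_less_1)
  thus ?thesis by (simp add: square_summable_def norm_power power_mult[symmetric] mult.commute)
qed

lemma norm_to_H2_le:
  assumes w: "w \<in> unit_disc"
  shows "cmod (to_H2 x w) \<le> norm x / sqrt (1 - (cmod w)^2)"
proof -
  define g where "g = Abs_ell2 (\<lambda>n. cnj (w^n))"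
  have cog: "coord g = (\<lambda>n. cnj (w^n))" unfolding g_def using square_summable_cnj_power[OF w] by (simp add: Abs_ell2_inverse)
  have w2: "(cmod w)^2 < 1" using w by (simp add: mem_unit_disc abs_square_less_1)
  have "to_H2 x w = cinner x g"
    using w by (simp add: to_H2_def cinner_coord cog)
  hence "cmod (to_H2 x w) \<le> norm x * norm g" by (simp add: norm_cinner)
  moreover have "(norm g)^2 = 1 / (1 - (cmod w)^2)"
  proof -
    have "(norm g)^2 = (\<Sum>n. ((cmod w)^2)^n)"
      by (simp add: norm_ell2_sq cog norm_power power_mult[symmetric] mult.commute)
    also have "\<dots> = 1 / (1 - (cmod w)^2)" using w2 by (simp add: suminf_geometric)
    finally show ?thesis .
  qed
  hence "norm g = 1 / sqrt (1 - (cmod w)^2)"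
    by (metis norm_ge_zero real_sqrt_divide real_sqrt_one real_sqrt_unique)
  ultimately show ?thesis by simp
qed

lemma continuous_on_norm_sq_circle:
  assumes "f holomorphic_on unit_disc" "r \<in> {0..<1}"
  shows "continuous_on {0..2*pi} (\<lambda>t. (cmod (f (of_real r * cis t)))^2)"
proof -
  have "continuous_on unit_disc f"
    using assms(1) by (rule holomorphic_on_imp_continuous_on)
  moreover have "continuous_on {0..2*pi} (\<lambda>t. of_real r * cis t)"
    by (intro continuous_intros)
  moreover have "(\<lambda>t. of_real r * cis t) ` {0..2*pi} \<subseteq> unit_disc"
    using assms(2) by (auto simp: mem_unit_disc norm_mult)
  ultimately have "continuous_on {0..2*pi} (\<lambda>t. f (of_real r * cis t))"
    by (rule continuous_on_compose2)
  thus ?thesis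
    by (intro continuous_intros)
qed

lemma int_mean_mult_le:
  assumes \<psi>: "\<psi> holomorphic_on unit_disc" and h: "h holomorphic_on unit_disc"
    and M: "\<And>z. z \<in> unit_disc \<Longrightarrow> cmod (h z) \<le> M" and r: "r \<in> {0..<1}"
  shows "int_mean (\<lambda>z. if z \<in> unit_disc then \<psi> z * h z else 0) r \<le> M^2 * int_mean \<psi> r"
proof -
  define g where "g = (\<lambda>z. if z \<in> unit_disc then \<psi> z * h z else 0)"
  have "g holomorphic_on unit_disc"
    using holomorphic_on_mult[OF \<psi> h] by (rule holomorphic_transform) (simp add: g_def)
  have "integral {0..2*pi} (\<lambda>t. (cmod (g (of_real r * cis t)))^2) \<le>
      integral {0..2*pi} (\<lambda>t. M^2 * (cmod (\<psi> (of_real r * cis t)))^2)"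
  proof (rule integral_le)
    show "(\<lambda>t. (cmod (g (of_real r * cis t)))^2) integrable_on {0..2*pi}"
      by (rule integrable_continuous_real[OF continuous_on_norm_sq_circle[OF \<open>g holomorphic_on _\<close> r]])
    show "(\<lambda>t. M^2 * (cmod (\<psi> (of_real r * cis t)))^2) integrable_on {0..2*pi}"
      by (intro integrable_on_mult_right integrable_continuous_real continuous_on_norm_sq_circle[OF \<psi> r])
    fix t
    have z: "of_real r * cis t \<in> unit_disc"
      using r by (simp add: mem_unit_disc norm_mult)
    have "cmod (g (of_real r * cis t)) \<le> cmod (\<psi> (of_real r * cis t)) * M"
      using z M[OF z] by (simp add: g_def norm_mult mult_left_mono)
    hence "(cmod (g (of_real r * cis t)))^2 \<le> (cmod (\<psi> (of_real r * cis t)) * M)^2"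
      by (intro power_mono) simp_all
    thus "(cmod (g (of_real r * cis t)))^2 \<le> M^2 * (cmod (\<psi> (of_real r * cis t)))^2"
      by (simp add: power_mult_distrib mult.commute)
  qed
  thus ?thesis
    unfolding int_mean_def g_def[symmetric] by (simp add: divide_right_mono)
qed

lemma H2_mult_bounded:
  assumes \<psi>: "hardy2 \<psi>" and h: "h holomorphic_on unit_disc"
    and M: "\<And>z. z \<in> unit_disc \<Longrightarrow> cmod (h z) \<le> M"
  shows "(\<lambda>z. if z \<in> unit_disc then \<psi> z * h z else 0) \<in> H2"
    and "H2_norm (\<lambda>z. if z \<in> unit_disc then \<psi> z * h z else 0) \<le> M * H2_norm \<psi>"
proof -
  define g where "g = (\<lambda>z. if z \<in> unit_disc then \<psi> z * h z else 0)"
  have "0 \<le> M"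
    using M[of 0] by (simp add: mem_unit_disc) (metis norm_ge_zero order_trans)
  have hol: "\<psi> holomorphic_on unit_disc" and bdd: "bdd_above (int_mean \<psi> ` {0..<1})"
    using \<psi> by (auto simp: hardy2_def)
  have le: "int_mean g r \<le> M^2 * (SUP r\<in>{0..<1}. int_mean \<psi> r)" if "r \<in> {0..<1}" for r
    using int_mean_mult_le[OF hol h M that] mult_left_mono[OF cSUP_upper[OF that bdd], of "M^2"]
    by (simp add: g_def)
  have "g holomorphic_on unit_disc"
    using holomorphic_on_mult[OF hol h] by (rule holomorphic_transform) (simp add: g_def)
  moreover have "bdd_above (int_mean g ` {0..<1})"
    using le by (intro bdd_aboveI2) 
  ultimately show "g \<in> H2"
    by (simp add: H2_def hardy2_def g_def)
  have "(SUP r\<in>{0..<1}. int_mean g r) \<le> M^2 * (SUP r\<in>{0..<1}. int_mean \<psi> r)"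
    using le by (intro cSUP_least) auto
  hence "sqrt (SUP r\<in>{0..<1}. int_mean g r) \<le> sqrt (M^2 * (SUP r\<in>{0..<1}. int_mean \<psi> r))"
    by (rule real_sqrt_le_mono)
  thus "H2_norm g \<le> M * H2_norm \<psi>"
    unfolding H2_norm_def using \<open>0 \<le> M\<close> by (simp add: real_sqrt_mult)
qed

lemma adjoint_unique:
  assumes "is_adjoint T S" "is_adjoint T S'"
  shows "S = S'"
proof (rule ext, rule cinner_eqI)
  show "cinner y (S x) = cinner y (S' x)" for x y
    using assms unfolding is_adjoint_def by metis
qed

lemma H2_basis_eq_to_H2_ket: "H2_basis n = to_H2 (ket n)"
proof
  fix z
  show "H2_basis n z = to_H2 (ket n) z"
  proof (cases "z \<in> unit_disc")
    case True
    have "(\<lambda>m. coord (ket n) m * z^m) = (\<lambda>m. if m = n then z^m else 0)"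
      by (auto simp: coord_ket fun_eq_iff)
    hence "(\<lambda>m. coord (ket n) m * z^m) sums z^n"
      using sums_single[of n "\<lambda>m. z^m"] by simp
    thus ?thesis
      using True by (simp add: H2_basis_def to_H2_def sums_iff)
  qed (simp add: H2_basis_def to_H2_def)
qed

section \<open>Transport of operators between \<open>H\<^sup>2\<close> and \<open>\<ell>\<^sup>2\<close>\<close>

definition ell2_op :: "H2op \<Rightarrow> ell2 \<Rightarrow> ell2" where
  "ell2_op T x = of_H2 (T (to_H2 x))"

definition H2_op :: "(ell2 \<Rightarrow> ell2) \<Rightarrow> H2op" where
  "H2_op R f = to_H2 (R (of_H2 f))"

lemma cinner_ell2_op:
  assumes "T ` H2 \<subseteq> H2"
  shows "cinner (ell2_op T x) y = H2_inner (T (to_H2 x)) (to_H2 y)"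
proof -
  have "T (to_H2 x) \<in> H2"
    using assms to_H2_in_H2 by blast
  thus ?thesis
    by (simp add: ell2_op_def H2_inner_eq_cinner to_H2_in_H2 of_H2_to_H2)
qed

lemma ell2_op_compose:
  assumes "T ` H2 \<subseteq> H2"
  shows "ell2_op S (ell2_op T x) = ell2_op (S \<circ> T) x"
proof -
  have "T (to_H2 x) \<in> H2"
    using assms to_H2_in_H2 by blast
  thus ?thesis
    by (simp add: ell2_op_def to_H2_of_H2)
qed

lemma clinear_ell2_op:
  assumes T: "H2_linear T"
  shows "clinear (ell2_op T)"
proof -
  have into: "T (to_H2 x) \<in> H2" for x
    using T to_H2_in_H2 by (simp add: H2_linear_def)
  show ?thesis
    using T unfolding clinear_def ell2_op_def
    by (simp add: to_H2_add to_H2_cscale H2_linear_def to_H2_in_H2 H2_add H2_cscale into)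
qed

lemma H2_linear_H2_op:
  assumes "clinear R"
  shows "H2_linear (H2_op R)"
  using assms
  by (simp add: H2_linear_def H2_op_def to_H2_in_H2 H2_add H2_cscale clinear_add clinear_cscale
      to_H2_add to_H2_cscale)

lemma is_adjoint_ell2_op:
  assumes "T ` H2 \<subseteq> H2" "H2_adjoint T S"
  shows "is_adjoint (ell2_op T) (ell2_op S)"
  unfolding is_adjoint_def
proof (intro allI)
  fix x y
  have "S (to_H2 y) \<in> H2"
    using assms(2) to_H2_in_H2 by (simp add: H2_adjoint_def)
  have "cinner (ell2_op T x) y = H2_inner (T (to_H2 x)) (to_H2 y)"
    by (rule cinner_ell2_op[OF assms(1)])
  also have "\<dots> = H2_inner (to_H2 x) (S (to_H2 y))"
    using assms(2) to_H2_in_H2 by (simp add: H2_adjoint_def)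
  also have "\<dots> = cinner x (ell2_op S y)"
    using \<open>S (to_H2 y) \<in> H2\<close> by (simp add: ell2_op_def H2_inner_eq_cinner to_H2_in_H2 of_H2_to_H2)
  finally show "cinner (ell2_op T x) y = cinner x (ell2_op S y)" .
qed

lemma H2_adjoint_H2_op:
  assumes "T ` H2 \<subseteq> H2" "is_adjoint (ell2_op T) S"
  shows "H2_adjoint T (H2_op S)"
  unfolding H2_adjoint_def
proof (intro conjI ballI)
  fix f g assume "f \<in> H2" "g \<in> H2"
  have "H2_inner (T f) g = cinner (ell2_op T (of_H2 f)) (of_H2 g)"
    using assms(1) \<open>f \<in> H2\<close> \<open>g \<in> H2\<close>
    by (auto simp: ell2_op_def to_H2_of_H2 H2_inner_eq_cinner)
  also have "\<dots> = cinner (of_H2 f) (S (of_H2 g))"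
    using assms(2) by (simp add: is_adjoint_def)
  also have "\<dots> = H2_inner f (H2_op S g)"
    using \<open>f \<in> H2\<close> by (simp add: H2_op_def H2_inner_eq_cinner to_H2_in_H2 of_H2_to_H2)
  finally show "H2_inner (T f) g = H2_inner f (H2_op S g)" .
qed (simp add: H2_op_def to_H2_in_H2)

lemma positive_sqrt_ell2_op:
  assumes T: "T ` H2 \<subseteq> H2" and P: "H2_pos_sqrt (S \<circ> T) P"
  shows "positive_sqrt (ell2_op S \<circ> ell2_op T) (ell2_op P)"
  unfolding positive_sqrt_def positive_op_def
proof (intro conjI allI)
  have lin: "H2_linear P" and into: "P ` H2 \<subseteq> H2"
    using P by (auto simp: H2_pos_sqrt_def H2_linear_def)
  show "clinear (ell2_op P)"
    by (rule clinear_ell2_op[OF lin])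
  fix x
  have "cinner (ell2_op P x) x = H2_inner (P (to_H2 x)) (to_H2 x)"
    by (rule cinner_ell2_op[OF into])
  thus "Im (cinner (ell2_op P x) x) = 0" "0 \<le> Re (cinner (ell2_op P x) x)"
    using P to_H2_in_H2 by (simp_all add: H2_pos_sqrt_def)
  show "ell2_op P (ell2_op P x) = (ell2_op S \<circ> ell2_op T) x"
    unfolding o_apply ell2_op_compose[OF into] ell2_op_compose[OF T]
    using P to_H2_in_H2 by (simp add: H2_pos_sqrt_def ell2_op_def)
qed

lemma H2_pos_sqrt_H2_op:
  assumes "T ` H2 \<subseteq> H2" "positive_sqrt (S \<circ> ell2_op T) R"
  shows "H2_pos_sqrt (H2_op S \<circ> T) (H2_op R)"
  using assms H2_linear_H2_op[of R]
  by (auto simp: H2_pos_sqrt_def positive_sqrt_def positive_op_def H2_op_def ell2_op_def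
      H2_inner_eq_cinner to_H2_in_H2 of_H2_to_H2 to_H2_of_H2 image_subset_iff)

lemma diagonal_ell2_op:
  assumes "P ` H2 \<subseteq> H2"
  shows "H2_inner (P (H2_basis n)) (H2_basis n) = cinner (ell2_op P (ket n)) (ket n)"
  using assms by (simp add: cinner_ell2_op H2_basis_eq_to_H2_ket)

text \<open>The trace in the definition of \<^const>\<open>trace_norm\<close> is well defined as soon as all
  admissible adjoints and square roots have the same diagonal.\<close>

lemma trace_class_trace_norm_eqI:
  assumes "H2_bounded_linear T" "H2_adjoint T S" "H2_pos_sqrt (S \<circ> T) P" "summable u"
    and diagonal: "\<And>S' P' n. H2_adjoint T S' \<Longrightarrow> H2_pos_sqrt (S' \<circ> T) P' \<Longrightarrow>
      Re (H2_inner (P' (H2_basis n)) (H2_basis n)) = u n"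
  shows "trace_class T \<and> trace_norm T = (\<Sum>n. u n)"
proof
  show "trace_class T"
    unfolding trace_class_def using assms(1-4)
    by (intro conjI exI[of _ S] exI[of _ P]) (simp_all add: diagonal[OF assms(2,3)])
  show "trace_norm T = (\<Sum>n. u n)"
    unfolding trace_norm_def
  proof (rule the_equality)
    show "\<exists>S P. H2_adjoint T S \<and> H2_pos_sqrt (S \<circ> T) P \<and>
        (\<lambda>n. Re (H2_inner (P (H2_basis n)) (H2_basis n))) sums (\<Sum>n. u n)"
      using assms(2-4)
      by (intro exI[of _ S] exI[of _ P] conjI) (simp_all add: diagonal[OF assms(2,3)] summable_sums)
  qed (use diagonal in \<open>auto simp: sums_iff\<close>)
qed

text \<open>The diagonal entries of \<open>|T|\<close> satisfy \<open>\<langle>|T|e\<^sub>n, e\<^sub>n\<rangle> \<le> \<parallel>|T|e\<^sub>n\<parallel> = \<parallel>Te\<^sub>n\<parallel>\<close>.\<close>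

theorem trace_class_if_summable_norm_basis:
  assumes T: "H2_bounded_linear T" and summable: "summable (\<lambda>n. H2_norm (T (H2_basis n)))"
  shows "trace_class T \<and> trace_norm T \<le> (\<Sum>n. H2_norm (T (H2_basis n)))"
proof -
  have lin: "H2_linear T" and into: "T ` H2 \<subseteq> H2"
    using T by (auto simp: H2_bounded_linear_def H2_linear_def)
  obtain K where K: "\<And>f. f \<in> H2 \<Longrightarrow> H2_norm (T f) \<le> K * H2_norm f"
    using T by (auto simp: H2_bounded_linear_def)
  have norm_T: "norm (ell2_op T x) = H2_norm (T (to_H2 x))" for x
    using into by (auto simp: ell2_op_def H2_norm_eq_norm_of_H2 to_H2_in_H2 image_subset_iff)
  have bound: "norm (ell2_op T x) \<le> K * norm x" for x
    using K[OF to_H2_in_H2] by (simp add: norm_T H2_norm_to_H2)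
  obtain S where S: "is_adjoint (ell2_op T) S"
    using adjoint_exists[OF clinear_ell2_op[OF lin] bound] by blast
  obtain R where R: "positive_sqrt (S \<circ> ell2_op T) R"
    and uniq: "\<And>R'. positive_sqrt (S \<circ> ell2_op T) R' \<Longrightarrow> R' = R"
    using positive_sqrt_modulus_ex1[OF clinear_ell2_op[OF lin] bound S] by blast
  define u where "u n = Re (cinner (R (ket n)) (ket n))" for n
  have diagonal: "Re (H2_inner (P (H2_basis n)) (H2_basis n)) = u n"
    if "H2_adjoint T S'" "H2_pos_sqrt (S' \<circ> T) P" for S' P n
  proof -
    have "P ` H2 \<subseteq> H2"
      using that by (auto simp: H2_pos_sqrt_def H2_linear_def)
    moreover have "ell2_op S' = S"
      using adjoint_unique[OF is_adjoint_ell2_op[OF into that(1)] S] .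
    ultimately have "ell2_op P = R"
      using uniq positive_sqrt_ell2_op[OF into that(2)] by simp
    thus ?thesis
      using \<open>P ` H2 \<subseteq> H2\<close> by (simp add: diagonal_ell2_op u_def)
  qed
  have u_bound: "u n \<le> H2_norm (T (H2_basis n))" for n
  proof -
    have "u n \<le> norm (R (ket n)) * norm (ket n)"
      unfolding u_def using complex_Re_le_cmod norm_cinner order_trans by blast
    also have "\<dots> = H2_norm (T (H2_basis n))"
      by (simp add: norm_positive_sqrt_modulus[OF S R] norm_T H2_basis_eq_to_H2_ket)
    finally show ?thesis .
  qed
  have "0 \<le> u n" for n
    using R by (simp add: u_def positive_sqrt_def positive_op_def)
  hence "summable u"
    using u_bound by (intro summable_comparison_test'[OF summable]) simp
  from T H2_adjoint_H2_op[OF into S] H2_pos_sqrt_H2_op[OF into R] this diagonal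
  have "trace_class T \<and> trace_norm T = (\<Sum>n. u n)"
    by (rule trace_class_trace_norm_eqI)
  moreover have "(\<Sum>n. u n) \<le> (\<Sum>n. H2_norm (T (H2_basis n)))"
    by (rule suminf_le[OF u_bound \<open>summable u\<close> summable])
  ultimately show ?thesis
    by simp
qed

section \<open>Weighted composition operators\<close>

lemma hardy2_const: "hardy2 (\<lambda>_. c)"
proof -
  have "int_mean (\<lambda>_. c) ` {0..<1} \<subseteq> {int_mean (\<lambda>_. c) 0}"
    by (auto simp: int_mean_def)
  thus ?thesis
    unfolding hardy2_def using bdd_above_mono[of "{int_mean (\<lambda>_. c) 0}"] by simp
qed

lemma H2_norm_nonneg: "f \<in> H2 \<Longrightarrow> 0 \<le> H2_norm f"
  by (simp add: H2_norm_eq_norm_of_H2)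

locale composition_symbol =
  fixes \<phi> :: "complex \<Rightarrow> complex" and s :: real
  assumes holomorphic: "\<phi> holomorphic_on unit_disc"
    and bounded: "\<And>z. z \<in> unit_disc \<Longrightarrow> cmod (\<phi> z) \<le> s"
    and less_one: "s < 1"
begin

lemma into_unit_disc: "z \<in> unit_disc \<Longrightarrow> \<phi> z \<in> unit_disc"
  using bounded less_one by (fastforce simp: mem_unit_disc)

lemma nonneg: "0 \<le> s"
  using bounded[of 0] by (simp add: mem_unit_disc) (meson norm_ge_zero order_trans)

lemma wcomp_op_eq: "wcomp_op \<psi> \<phi> f = (\<lambda>z. if z \<in> unit_disc then \<psi> z * f (\<phi> z) else 0)"
  by (simp add: wcomp_op_def fun_eq_iff)

text \<open>Point evaluation on \<open>H\<^sup>2\<close> is bounded on the disc of radius \<open>s\<close>, so \<open>f \<circ> \<phi>\<close> is a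
  bounded multiplier.\<close>

lemma wcomp_op_H2:
  assumes \<psi>: "hardy2 \<psi>" and f: "f \<in> H2"
  shows "wcomp_op \<psi> \<phi> f \<in> H2"
    and "H2_norm (wcomp_op \<psi> \<phi> f) \<le> H2_norm f / sqrt (1 - s^2) * H2_norm \<psi>"
proof -
  have "f holomorphic_on unit_disc"
    using f by (simp add: H2_def hardy2_def)
  moreover have "\<phi> ` unit_disc \<subseteq> unit_disc"
    using into_unit_disc by blast
  ultimately have hol: "(\<lambda>z. f (\<phi> z)) holomorphic_on unit_disc"
    using holomorphic_on_compose_gen[OF holomorphic] by (simp add: o_def)
  have "cmod (f (\<phi> z)) \<le> H2_norm f / sqrt (1 - s^2)" if z: "z \<in> unit_disc" for z
  proof -
    have "(cmod (\<phi> z))^2 \<le> s^2"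
      using bounded[OF z] by (intro power_mono) simp_all
    moreover have "s^2 < 1"
      using nonneg less_one by (simp add: abs_square_less_1)
    ultimately have "sqrt (1 - s^2) \<le> sqrt (1 - (cmod (\<phi> z))^2)" "0 < sqrt (1 - s^2)"
      by simp_all
    hence "norm (of_H2 f) / sqrt (1 - (cmod (\<phi> z))^2) \<le> norm (of_H2 f) / sqrt (1 - s^2)"
      by (intro divide_left_mono) simp_all
    moreover have "cmod (f (\<phi> z)) \<le> norm (of_H2 f) / sqrt (1 - (cmod (\<phi> z))^2)"
      using norm_to_H2_le[OF into_unit_disc[OF z], of "of_H2 f"] by (simp add: to_H2_of_H2[OF f])
    ultimately show ?thesis
      by (simp add: H2_norm_eq_norm_of_H2[OF f])
  qed
  from H2_mult_bounded[OF \<psi> hol this] show "wcomp_op \<psi> \<phi> f \<in> H2"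
    and "H2_norm (wcomp_op \<psi> \<phi> f) \<le> H2_norm f / sqrt (1 - s^2) * H2_norm \<psi>"
    by (simp_all add: wcomp_op_eq)
qed

lemma H2_bounded_linear_wcomp_op:
  assumes "hardy2 \<psi>"
  shows "H2_bounded_linear (wcomp_op \<psi> \<phi>)"
  unfolding H2_bounded_linear_def H2_linear_def
proof (intro conjI ballI allI exI)
  fix f assume "f \<in> H2"
  show "wcomp_op \<psi> \<phi> f \<in> H2"
    by (rule wcomp_op_H2(1)[OF assms \<open>f \<in> H2\<close>])
  show "H2_norm (wcomp_op \<psi> \<phi> f) \<le> H2_norm \<psi> / sqrt (1 - s^2) * H2_norm f"
    using wcomp_op_H2(2)[OF assms \<open>f \<in> H2\<close>] by (simp add: field_simps)
qed (simp_all add: wcomp_op_def fun_eq_iff distrib_left mult.left_commute)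

lemma H2_norm_wcomp_op_basis:
  assumes "hardy2 \<psi>"
  shows "H2_norm (wcomp_op \<psi> \<phi> (H2_basis n)) \<le> s^n * H2_norm \<psi>"
proof -
  have "wcomp_op \<psi> \<phi> (H2_basis n) = (\<lambda>z. if z \<in> unit_disc then \<psi> z * \<phi> z ^ n else 0)"
    by (simp add: wcomp_op_eq H2_basis_def into_unit_disc fun_eq_iff)
  moreover have "cmod (\<phi> z ^ n) \<le> s^n" if "z \<in> unit_disc" for z
    unfolding norm_power by (rule power_mono[OF bounded[OF that]]) simp
  ultimately show ?thesis
    using H2_mult_bounded(2)[OF assms, of "\<lambda>z. \<phi> z ^ n"] holomorphic
    by (simp add: holomorphic_on_power)
qed

theorem trace_class_wcomp_op:
  assumes "hardy2 \<psi>"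
  shows "trace_class (wcomp_op \<psi> \<phi>) \<and> trace_norm (wcomp_op \<psi> \<phi>) \<le> H2_norm \<psi> / (1 - s)"
proof -
  have geometric: "(\<lambda>n. s^n * H2_norm \<psi>) sums (H2_norm \<psi> / (1 - s))"
    using sums_mult2[OF geometric_sums, of s "H2_norm \<psi>"] nonneg less_one by simp
  have "norm (H2_norm (wcomp_op \<psi> \<phi> (H2_basis n))) \<le> s^n * H2_norm \<psi>" for n
    using H2_norm_wcomp_op_basis[OF assms, of n]
      H2_norm_nonneg[OF wcomp_op_H2(1)[OF assms, of "H2_basis n"]]
    by (simp add: H2_basis_eq_to_H2_ket to_H2_in_H2)
  hence "summable (\<lambda>n. H2_norm (wcomp_op \<psi> \<phi> (H2_basis n)))"
    "(\<Sum>n. H2_norm (wcomp_op \<psi> \<phi> (H2_basis n))) \<le> H2_norm \<psi> / (1 - s)"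
    using geometric summable_comparison_test' suminf_le sums_summable sums_unique
    by (metis (no_types, lifting) real_norm_def abs_le_D1)+
  thus ?thesis
    using trace_class_if_summable_norm_basis[OF H2_bounded_linear_wcomp_op[OF assms]] by auto
qed

end

theorem mainTheorem8:
  fixes \<psi> \<phi> :: "complex \<Rightarrow> complex"
  assumes "hardy2 \<psi>"
    and "\<phi> holomorphic_on unit_disc"
    and "\<phi> ` unit_disc \<subseteq> unit_disc"
    and "(SUP z\<in>unit_disc. cmod (\<phi> z)) < 1"
  shows "trace_class (wcomp_op \<psi> \<phi>) \<and> trace_class (comp_op \<phi>) \<and>
         trace_norm (wcomp_op \<psi> \<phi>) \<le> H2_norm \<psi> / (1 - (SUP z\<in>unit_disc. cmod (\<phi> z)))"
proof -
  have "bdd_above ((\<lambda>z. cmod (\<phi> z)) ` unit_disc)"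
    using assms(3) by (auto intro!: bdd_aboveI[of _ 1] simp: mem_unit_disc less_imp_le)
  then interpret composition_symbol \<phi> "SUP z\<in>unit_disc. cmod (\<phi> z)"
    using assms(2,4) by unfold_locales (auto intro: cSUP_upper)
  have "comp_op \<phi> = wcomp_op (\<lambda>_. 1) \<phi>"
    by (simp add: comp_op_def wcomp_op_def fun_eq_iff)
  thus ?thesis
    using trace_class_wcomp_op[OF assms(1)] trace_class_wcomp_op[OF hardy2_const] by simp
qed

end
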